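(* Let $P(x,y)=\sum_{\ell_1,\ell_2}x^{\ell_1}y^{\ell_2}a_{\ell_1,\ell_2}$ be a slice regular quaternionic polynomial in two variables with coefficients $a_{\ell_1,\ell_2}\in\mathbb{H}$ not all zero. Then $\log|P|$ is integrable on $\mathbb{T}^2(\mathbb{H})$, so $m_{\mathbb{H}}(P)$ exists (as an absolutely convergent improper integral).
   Context: $\mathbb{H}$ denotes the quaternions, $\mathbb{T}^2(\mathbb{H})=\{(x,y)\in\mathbb{H}^2:|x|=|y|=1\}$ with probability Haar measure $\mu$, and $m_{\mathbb{H}}(P)=\int_{\mathbb{T}^2(\mathbb{H})}\log|P(x,y)|\,d\mu$. The polynomial is evaluated with quaternion multiplication in the written order $x^{\ell_1}y^{\ell_2}a_{\ell_1,\ell_2}$. *)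

theory Defs
  imports "HOL-Analysis.Analysis"
begin

text \<open>Quaternions H are modelled as real^4 (components 1,2,3,4 = real, i, j, k parts);
  the quaternion norm |q| is the Euclidean norm.  Hamilton product:\<close>

definition qmult :: "real^4 \<Rightarrow> real^4 \<Rightarrow> real^4" where
  "qmult p q = vector
     [p$1*q$1 - p$2*q$2 - p$3*q$3 - p$4*q$4,
      p$1*q$2 + p$2*q$1 + p$3*q$4 - p$4*q$3,
      p$1*q$3 - p$2*q$4 + p$3*q$1 + p$4*q$2,
      p$1*q$4 + p$2*q$3 - p$3*q$2 + p$4*q$1]"

definition qone :: "real^4" where
  "qone = vector [1, 0, 0, 0]"

definition qpow :: "real^4 \<Rightarrow> nat \<Rightarrow> real^4" where
  "qpow p n = (qmult p ^^ n) qone"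

definition qpoly2 :: "nat \<Rightarrow> (nat \<Rightarrow> nat \<Rightarrow> real^4) \<Rightarrow> real^4 \<Rightarrow> real^4 \<Rightarrow> real^4" where
  "qpoly2 n a x y = (\<Sum>l1\<le>n. \<Sum>l2\<le>n. qmult (qmult (qpow x l1) (qpow y l2)) (a l1 l2))"

text \<open>Normalized uniform (Haar) probability measure on the unit quaternions S^3:
  radial projection of the normalized Lebesgue measure on the unit ball.\<close>

definition sphere_unif :: "(real^4) measure" where
  "sphere_unif = distr (uniform_measure lborel (ball 0 1)) borel (\<lambda>x. x /\<^sub>R norm x)"

definition torusH :: "((real^4) \<times> (real^4)) measure" where
  "torusH = sphere_unif \<Otimes>\<^sub>M sphere_unif"

end

theory Submission
  imports Defs "HOL-Computational_Algebra.Fundamental_Theorem_Algebra"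
begin

text \<open>Write \<open>x = u / \<bar>u\<bar>\<close>, \<open>y = v / \<bar>v\<bar>\<close> with \<open>(u, v)\<close> uniform on the product of two
  unit balls. Replacing \<open>\<bar>u\<bar>\<close>, \<open>\<bar>v\<bar>\<close> by variables \<open>r\<close>, \<open>s\<close> in the homogenisation
  \<open>\<Sum> r^(2n - l1) s^(2n - l2) u^l1 v^l2 a(l1, l2)\<close> makes its squared norm a real polynomial, and the
  product over the sign changes \<open>r = \<plusminus>\<bar>u\<bar>\<close>, \<open>s = \<plusminus>\<bar>v\<bar>\<close> is even in \<open>r\<close> and \<open>s\<close>, hence a real
  polynomial \<open>q(u, v)\<close> in eight variables. As \<open>\<bar>P\<bar>\<close> is bounded on the torus, \<open>\<bar>ln \<bar>P(x, y)\<bar>\<bar>\<close>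
  is at most a constant plus the negative part of \<open>ln \<bar>q(u, v)\<bar>\<close>. The latter is integrable
  over a cube, by Fubini and induction on the number of variables: in one variable, the integral
  of the negative part of \<open>ln \<bar>p\<bar>\<close> over \<open>[-1, 1]\<close> is bounded in terms of the degree and any
  single coefficient (factor \<open>p\<close> over \<open>\<complex>\<close>). Finally \<open>q\<close> does not vanish identically: on the
  complex slice \<open>\<complex> \<subseteq> \<bbbH>\<close>, \<open>P\<close> is a nonzero complex polynomial in two variables, which is
  nonzero at all four points \<open>(\<plusminus>z, \<plusminus>w)\<close> for suitable unit complex numbers \<open>z\<close>, \<open>w\<close>.\<close>

text \<open>\<open>ln_minus x\<close> is the negative part of \<open>ln \<bar>x\<bar>\<close> (the coercion \<open>ennreal\<close> cuts off
  negative values); it is \<open>\<infinity>\<close> at \<open>0\<close>.\<close>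

definition ln_minus :: "real \<Rightarrow> ennreal" where
  "ln_minus x = (if x = 0 then \<infinity> else ennreal (- ln \<bar>x\<bar>))"

lemma borel_measurable_ln_minus [measurable]: "ln_minus \<in> borel_measurable borel"
  unfolding ln_minus_def by measurable

lemma ln_minus_abs [simp]: "ln_minus \<bar>x\<bar> = ln_minus x"
  by (simp add: ln_minus_def)

lemma ln_minus_nonzero: "x \<noteq> 0 \<Longrightarrow> ln_minus x = ennreal (- ln \<bar>x\<bar>)"
  by (simp add: ln_minus_def)

lemma ennreal_plus_le: "ennreal (a + b) \<le> ennreal a + ennreal b"
  by (auto simp: ennreal_plus_if intro!: ennreal_leI)

lemma ln_minus_mult: "ln_minus (a * b) \<le> ln_minus a + ln_minus b"
proof (cases "a = 0 \<or> b = 0")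
  case True
  then show ?thesis by (auto simp: ln_minus_def)
next
  case False
  then have "ln_minus (a * b) = ennreal (- ln \<bar>a\<bar> + - ln \<bar>b\<bar>)"
    by (simp add: ln_minus_def abs_mult ln_mult)
  also have "\<dots> \<le> ennreal (- ln \<bar>a\<bar>) + ennreal (- ln \<bar>b\<bar>)"
    by (rule ennreal_plus_le)
  finally show ?thesis
    using False by (simp add: ln_minus_def)
qed

lemma neg_ln_le_powr_neg_half:
  assumes "(d::real) > 0"
  shows "- ln d \<le> 2 * d powr (-1/2)"
proof -
  have "ln (d powr (-1/2)) \<le> d powr (-1/2) - 1"
    by (rule ln_le_minus_one) (use assms in simp)
  moreover have "ln (d powr (-1/2)) = (-1/2) * ln d"
    using assms by (simp add: ln_powr)
  moreover have "d powr (-1/2) \<ge> 0"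
    by simp
  ultimately show ?thesis
    by linarith
qed

section \<open>Logarithmic integrability of real polynomials on an interval\<close>

lemma nn_integral_powr_neg_half:
  assumes "c \<ge> 0"
  shows "(\<integral>\<^sup>+x. ennreal (x powr (-1/2)) * indicator {0..c} x \<partial>lborel) = ennreal (2 * sqrt c)"
proof -
  have "((\<lambda>x::real. x powr (-1/2)) has_integral (c powr (-1/2+1) / (-1/2+1))) {0..c}"
    by (rule has_integral_powr_from_0) (use assms in auto)
  moreover have "c powr (-1/2+1) / (-1/2+1) = 2 * sqrt c"
    using assms by (simp add: powr_half_sqrt[symmetric])
  ultimately have "((\<lambda>x::real. x powr (-1/2)) has_integral (2 * sqrt c)) {0..c}"
    by (simp add: mult.commute)
  from nn_integral_has_integral_lebesgue'[OF _ this] show ?thesis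
    by simp
qed

lemma nn_integral_abs_powr_neg_half:
  assumes "c \<ge> 0"
  shows "(\<integral>\<^sup>+x. ennreal (\<bar>x\<bar> powr (-1/2)) * indicator {-c..c} x \<partial>lborel) \<le> ennreal (4 * sqrt c)"
proof -
  let ?half = "\<lambda>x. ennreal (x powr (-1/2)) * indicator {0..c} x"
  have "(\<integral>\<^sup>+x. ennreal (\<bar>x\<bar> powr (-1/2)) * indicator {-c..c} x \<partial>lborel)
      \<le> (\<integral>\<^sup>+x. ?half x + ?half (-x) \<partial>lborel)"
    by (intro nn_integral_mono) (auto split: split_indicator)
  also have "\<dots> = (\<integral>\<^sup>+x. ?half x \<partial>lborel) + (\<integral>\<^sup>+x. ?half (-x) \<partial>lborel)"
    by (rule nn_integral_add) auto
  also have "(\<integral>\<^sup>+x. ?half (-x) \<partial>lborel) = (\<integral>\<^sup>+x. ?half x \<partial>lborel)"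
    using nn_integral_real_affine[of ?half "-1" 0] by simp
  finally show ?thesis
    using nn_integral_powr_neg_half[OF assms] assms
    by (simp add: ennreal_plus[symmetric] del: ennreal_plus)
qed

lemma nn_integral_shifted_powr_neg_half:
  assumes "\<bar>a\<bar> \<le> 2"
  shows "(\<integral>\<^sup>+y. ennreal (\<bar>y - a\<bar> powr (-1/2)) * indicator {-1..1::real} y \<partial>lborel) \<le> 8"
proof -
  have "(\<integral>\<^sup>+y. ennreal (\<bar>y - a\<bar> powr (-1/2)) * indicator {-1..1::real} y \<partial>lborel) \<le>
     (\<integral>\<^sup>+y. ennreal (\<bar>y - a\<bar> powr (-1/2)) * indicator {-3..3} (y - a) \<partial>lborel)"
    using assms by (intro nn_integral_mono) (auto split: split_indicator)
  also have "\<dots> = (\<integral>\<^sup>+x. ennreal (\<bar>x\<bar> powr (-1/2)) * indicator {-3..3} x \<partial>lborel)"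
    using nn_integral_real_affine[of "\<lambda>y. ennreal (\<bar>y - a\<bar> powr (-1/2)) * indicator {-3..3} (y - a)" 1 a]
    by simp
  also have "\<dots> \<le> ennreal (4 * sqrt 3)"
    using nn_integral_abs_powr_neg_half[of 3] by simp
  also have "\<dots> \<le> 8"
  proof -
    have "sqrt 3 \<le> (2::real)"
      by (rule real_le_lsqrt) auto
    then show ?thesis
      using ennreal_leI[of "4 * sqrt 3" 8] by simp
  qed
  finally show ?thesis .
qed

text \<open>Dividing by \<open>1 + \<bar>r\<bar>\<close> makes the bounds uniform in \<open>r\<close>; far roots do not come close
  to \<open>[-1, 1]\<close>, and near roots contribute an integrable singularity \<open>\<bar>y - Re r\<bar>\<^sup>-\<^sup>1\<^sup>/\<^sup>2\<close>.\<close>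

lemma ln_minus_far_linear_factor_le:
  fixes r :: complex and y :: real
  assumes "\<bar>y\<bar> \<le> 1" "2 \<le> cmod r"
  shows "ln_minus (cmod (of_real y - r) / (1 + cmod r)) \<le> ennreal (ln 3)"
proof -
  define t where "t = cmod (of_real y - r) / (1 + cmod r)"
  have "cmod r - cmod (of_real y :: complex) \<le> cmod (of_real y - r)"
    by (metis norm_minus_commute norm_triangle_ineq2)
  then have "1 + cmod r \<le> 3 * cmod (of_real y - r)"
    using assms by simp
  then have "1/3 \<le> t"
    unfolding t_def by (simp add: field_simps add_pos_nonneg)
  then have "- ln t \<le> - ln (1/3)"
    by simp
  also have "- ln (1/3) = ln (3::real)"
    by (simp add: ln_div)
  finally show ?thesis
    using \<open>1/3 \<le> t\<close> unfolding t_def[symmetric] by (simp add: ln_minus_nonzero ennreal_leI)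
qed

lemma ln_minus_near_linear_factor_le:
  fixes r :: complex and y :: real
  assumes "cmod r < 2" "y \<noteq> Re r"
  shows "ln_minus (cmod (of_real y - r) / (1 + cmod r))
    \<le> ennreal (ln 3) + 2 * ennreal (\<bar>y - Re r\<bar> powr (-1/2))"
proof -
  define t where "t = cmod (of_real y - r) / (1 + cmod r)"
  define d where "d = \<bar>y - Re r\<bar>"
  have d_pos: "d > 0"
    using assms(2) unfolding d_def by simp
  have "d \<le> cmod (of_real y - r)"
    unfolding d_def using abs_Re_le_cmod[of "of_real y - r"] by simp
  moreover have "cmod (of_real y - r) * (1 + cmod r) \<le> cmod (of_real y - r) * 3"
    using assms(1) by (intro mult_left_mono) auto
  then have "cmod (of_real y - r) \<le> 3 * t"
    unfolding t_def by (simp add: field_simps add_pos_nonneg)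
  ultimately have "d / 3 \<le> t"
    by linarith
  then have "ln d - ln 3 \<le> ln t"
    using d_pos ln_le_cancel_iff[of "d / 3" t] by (simp add: ln_div)
  then have "- ln t \<le> ln 3 + 2 * d powr (-1/2)"
    using neg_ln_le_powr_neg_half[OF d_pos] by simp
  then have "ln_minus t \<le> ennreal (ln 3 + 2 * d powr (-1/2))"
    using \<open>d / 3 \<le> t\<close> d_pos by (simp add: ln_minus_nonzero ennreal_leI del: ennreal_plus)
  also have "\<dots> \<le> ennreal (ln 3) + 2 * ennreal (d powr (-1/2))"
    using ennreal_plus_le[of "ln 3" "2 * d powr (-1/2)"] by (simp add: ennreal_mult)
  finally show ?thesis
    unfolding t_def d_def .
qed

lemma nn_integral_ln_minus_linear_factor:
  fixes r :: complex
  shows "(\<integral>\<^sup>+y. ln_minus (cmod (of_real y - r) / (1 + cmod r)) * indicator {-1..1::real} y \<partial>lborel)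
    \<le> ennreal (2 * ln 3 + 16)"
proof (cases "cmod r < 2")
  case False
  have "(\<integral>\<^sup>+y. ln_minus (cmod (of_real y - r) / (1 + cmod r)) * indicator {-1..1::real} y \<partial>lborel)
      \<le> (\<integral>\<^sup>+y. ennreal (ln 3) * indicator {-1..1::real} y \<partial>lborel)"
    using False by (intro nn_integral_mono)
      (auto simp: abs_le_iff intro!: ln_minus_far_linear_factor_le split: split_indicator)
  also have "\<dots> = ennreal (2 * ln 3)"
    by (simp add: nn_integral_cmult_indicator ennreal_mult mult.commute)
  also have "\<dots> \<le> ennreal (2 * ln 3 + 16)"
    by (intro ennreal_leI) simp
  finally show ?thesis .
next
  case True
  then have "\<bar>Re r\<bar> \<le> 2"
    using abs_Re_le_cmod[of r] by linarith
  let ?sing = "\<lambda>y. ennreal (\<bar>y - Re r\<bar> powr (-1/2)) * indicator {-1..1::real} y"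
  have "(\<integral>\<^sup>+y. ln_minus (cmod (of_real y - r) / (1 + cmod r)) * indicator {-1..1::real} y \<partial>lborel)
      \<le> (\<integral>\<^sup>+y. ennreal (ln 3) * indicator {-1..1::real} y + 2 * ?sing y \<partial>lborel)"
  proof (rule nn_integral_mono_AE)
    show "AE y in lborel. ln_minus (cmod (of_real y - r) / (1 + cmod r)) * indicator {-1..1::real} y
        \<le> ennreal (ln 3) * indicator {-1..1::real} y + 2 * ?sing y"
      using AE_lborel_singleton[of "Re r"]
    proof eventually_elim
      case (elim y)
      show ?case
        using ln_minus_near_linear_factor_le[OF True elim]
        by (cases "y \<in> {-1..1}") (simp_all add: distrib_right)
    qed
  qed
  also have "\<dots> = ennreal (ln 3) * 2 + 2 * (\<integral>\<^sup>+y. ?sing y \<partial>lborel)"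
    by (simp add: nn_integral_add nn_integral_cmult nn_integral_cmult_indicator)
  also have "\<dots> \<le> ennreal (ln 3) * 2 + 2 * 8"
    by (intro add_left_mono mult_left_mono nn_integral_shifted_powr_neg_half \<open>\<bar>Re r\<bar> \<le> 2\<close>) simp
  also have "\<dots> = ennreal (2 * ln 3 + 16)"
    by (subst ennreal_plus) (auto simp: ennreal_mult mult.commute)
  finally show ?thesis .
qed

definition coeff_norm_sum :: "'a::real_normed_field poly \<Rightarrow> real" where
  "coeff_norm_sum p = (\<Sum>j\<le>degree p. norm (coeff p j))"

lemma coeff_norm_sum_eq:
  assumes "degree p \<le> D"
  shows "coeff_norm_sum p = (\<Sum>j\<le>D. norm (coeff p j))"
  unfolding coeff_norm_sum_def
  by (rule sum.mono_neutral_left) (use assms in \<open>auto simp: coeff_eq_0\<close>)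

lemma norm_coeff_le_coeff_norm_sum: "norm (coeff p j) \<le> coeff_norm_sum p"
proof (cases "j \<le> degree p")
  case True
  then show ?thesis
    unfolding coeff_norm_sum_def by (intro member_le_sum) auto
qed (simp add: coeff_eq_0 coeff_norm_sum_def sum_nonneg)

lemma coeff_norm_sum_pos:
  assumes "p \<noteq> 0"
  shows "coeff_norm_sum p > 0"
proof -
  have "0 < norm (lead_coeff p)"
    using assms by simp
  also have "\<dots> \<le> coeff_norm_sum p"
    by (rule norm_coeff_le_coeff_norm_sum)
  finally show ?thesis .
qed

lemma coeff_norm_sum_smult: "coeff_norm_sum (smult c q) = norm c * coeff_norm_sum q"
  by (simp add: coeff_norm_sum_eq[OF degree_smult_le] coeff_norm_sum_def sum_distrib_left norm_mult)

lemma coeff_norm_sum_linear_mult: "coeff_norm_sum ([:-r, 1:] * q) \<le> (1 + norm r) * coeff_norm_sum q"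
proof -
  define D where "D = Suc (degree q)"
  have "[:-r, 1:] * q = smult (-r) q + pCons 0 q"
    by (simp add: mult_pCons_left)
  moreover have "degree ([:-r, 1:] * q) \<le> D"
    unfolding D_def using degree_mult_le[of "[:-r, 1:]" q] by simp
  ultimately have "coeff_norm_sum ([:-r, 1:] * q) = (\<Sum>j\<le>D. norm (coeff (smult (-r) q) j + coeff (pCons 0 q) j))"
    by (simp add: coeff_norm_sum_eq)
  also have "\<dots> \<le> (\<Sum>j\<le>D. norm (coeff (smult (-r) q) j)) + (\<Sum>j\<le>D. norm (coeff (pCons 0 q) j))"
    unfolding sum.distrib[symmetric] by (intro sum_mono norm_triangle_ineq)
  also have "(\<Sum>j\<le>D. norm (coeff (smult (-r) q) j)) = coeff_norm_sum (smult (-r) q)"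
    using degree_smult_le[of "-r" q] by (intro coeff_norm_sum_eq[symmetric]) (simp add: D_def)
  also have "\<dots> = norm r * coeff_norm_sum q"
    by (simp only: coeff_norm_sum_smult norm_minus_cancel)
  also have "(\<Sum>j\<le>D. norm (coeff (pCons 0 q) j)) = coeff_norm_sum q"
    unfolding D_def coeff_norm_sum_def by (subst sum.atMost_Suc_shift) simp
  finally show ?thesis
    by (simp add: algebra_simps)
qed

lemma borel_measurable_ln_minus_poly [measurable]:
  "(\<lambda>y::real. ln_minus (norm (poly p (of_real y :: 'a::real_normed_field)))) \<in> borel_measurable borel"
proof -
  have "(\<lambda>y::real. norm (poly p (of_real y :: 'a))) \<in> borel_measurable borel"
    by (intro borel_measurable_continuous_onI continuous_intros)
  then show ?thesis
    by measurable
qed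

lemma borel_measurable_ln_minus_real_poly [measurable]:
  "(\<lambda>y::real. ln_minus (poly p y)) \<in> borel_measurable borel"
proof -
  have "(\<lambda>y::real. poly p y) \<in> borel_measurable borel"
    by (intro borel_measurable_continuous_onI continuous_intros)
  then show ?thesis
    by measurable
qed

lemma borel_measurable_ln_minus_linear [measurable]:
  "(\<lambda>y::real. ln_minus (cmod (of_real y - r) / s)) \<in> borel_measurable borel"
proof -
  have "(\<lambda>y::real. cmod (of_real y - r)) \<in> borel_measurable borel"
    by (intro borel_measurable_continuous_onI continuous_intros)
  then show ?thesis
    by measurable
qed

lemma ln_minus_poly_linear_mult_le:
  fixes r :: complex and q :: "complex poly" and y :: real
  defines "s \<equiv> 1 + cmod r"
  shows "ln_minus (cmod (poly ([:-r, 1:] * q) (of_real y)))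
    \<le> ln_minus (cmod (of_real y - r) / s) + ln_minus (cmod (poly (smult (of_real s) q) (of_real y)))"
proof -
  have "s > 0"
    unfolding s_def by (simp add: add_pos_nonneg)
  have "poly ([:-r, 1:] * q) (of_real y) = (of_real y - r) * poly q (of_real y)"
    by (simp add: left_diff_distrib)
  then have "cmod (poly ([:-r, 1:] * q) (of_real y))
      = (cmod (of_real y - r) / s) * cmod (poly (smult (of_real s) q) (of_real y))"
    using \<open>s > 0\<close> by (simp add: norm_mult)
  then show ?thesis
    by (simp only: ln_minus_mult)
qed

lemma nn_integral_ln_minus_poly_linear_mult:
  fixes r :: complex and q :: "complex poly"
  shows "(\<integral>\<^sup>+y. ln_minus (cmod (poly ([:-r, 1:] * q) (of_real y))) * indicator {-1..1::real} y \<partial>lborel)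
    \<le> ennreal (2 * ln 3 + 16)
      + (\<integral>\<^sup>+y. ln_minus (cmod (poly (smult (of_real (1 + cmod r)) q) (of_real y))) * indicator {-1..1::real} y \<partial>lborel)"
proof -
  let ?q' = "smult (of_real (1 + cmod r)) q"
  have "(\<integral>\<^sup>+y. ln_minus (cmod (poly ([:-r, 1:] * q) (of_real y))) * indicator {-1..1::real} y \<partial>lborel)
     \<le> (\<integral>\<^sup>+y. ln_minus (cmod (of_real y - r) / (1 + cmod r)) * indicator {-1..1::real} y
          + ln_minus (cmod (poly ?q' (of_real y))) * indicator {-1..1::real} y \<partial>lborel)"
    using ln_minus_poly_linear_mult_le[of r q] by (intro nn_integral_mono) (auto split: split_indicator)
  also have "\<dots> = (\<integral>\<^sup>+y. ln_minus (cmod (of_real y - r) / (1 + cmod r)) * indicator {-1..1::real} y \<partial>lborel)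
      + (\<integral>\<^sup>+y. ln_minus (cmod (poly ?q' (of_real y))) * indicator {-1..1::real} y \<partial>lborel)"
    by (rule nn_integral_add; measurable)
  also have "\<dots> \<le> ennreal (2 * ln 3 + 16) + (\<integral>\<^sup>+y. ln_minus (cmod (poly ?q' (of_real y))) * indicator {-1..1::real} y \<partial>lborel)"
    by (intro add_right_mono nn_integral_ln_minus_linear_factor)
  finally show ?thesis .
qed

text \<open>Induction on the degree: split off a root \<open>r\<close>, and pass the normalising factor
  \<open>1 + \<bar>r\<bar>\<close> on to the cofactor; this can only increase the coefficient norm.\<close>

lemma nn_integral_ln_minus_cpoly:
  fixes p :: "complex poly"
  assumes "p \<noteq> 0"
  shows "(\<integral>\<^sup>+y. ln_minus (cmod (poly p (of_real y))) * indicator {-1..1::real} y \<partial>lborel)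
     \<le> ennreal ((2 * ln 3 + 16) * degree p) + 2 * ennreal (- ln (coeff_norm_sum p))"
  using assms
proof (induction "degree p" arbitrary: p)
  case 0
  then obtain c where p: "p = [:c:]" and "c \<noteq> 0"
    by (metis degree_eq_zeroE pCons_eq_0_iff)
  then have "(\<integral>\<^sup>+y. ln_minus (cmod (poly p (of_real y))) * indicator {-1..1::real} y \<partial>lborel)
      = ennreal (- ln (cmod c)) * 2"
    by (simp add: nn_integral_cmult_indicator ln_minus_nonzero)
  then show ?case
    using p by (simp add: coeff_norm_sum_def mult.commute)
next
  case (Suc d p)
  have "\<not> constant (poly p)"
    using Suc(2) constant_degree[of p] by simp
  then obtain r where "poly p r = 0"
    using fundamental_theorem_of_algebra by blast
  then obtain q where p: "p = [:-r, 1:] * q"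
    by (metis dvdE poly_eq_0_iff_dvd)
  define s where "s = 1 + cmod r"
  define q' where "q' = smult (of_real s) q"
  have "s > 0" "q \<noteq> 0"
    using Suc(3) p by (auto simp: s_def add_pos_nonneg)
  moreover have "degree p = Suc (degree q)"
    unfolding p using \<open>q \<noteq> 0\<close> by (subst degree_mult_eq) auto
  ultimately have q': "q' \<noteq> 0" "degree q' = d"
    using Suc(2) by (simp_all add: q'_def)
  have "cmod (of_real s) = s"
    using \<open>s > 0\<close> by simp
  then have "coeff_norm_sum q' = s * coeff_norm_sum q"
    by (simp only: q'_def coeff_norm_sum_smult)
  then have "coeff_norm_sum p \<le> coeff_norm_sum q'"
    unfolding p s_def by (simp only: coeff_norm_sum_linear_mult)
  then have "ennreal (- ln (coeff_norm_sum q')) \<le> ennreal (- ln (coeff_norm_sum p))"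
    using coeff_norm_sum_pos[OF Suc(3)] by (intro ennreal_leI) simp
  then have IH: "(\<integral>\<^sup>+y. ln_minus (cmod (poly q' (of_real y))) * indicator {-1..1::real} y \<partial>lborel)
     \<le> ennreal ((2 * ln 3 + 16) * d) + 2 * ennreal (- ln (coeff_norm_sum p))"
    using Suc(1)[of q'] q' by (meson add_left_mono mult_left_mono order.trans zero_le)
  have "(\<integral>\<^sup>+y. ln_minus (cmod (poly p (of_real y))) * indicator {-1..1::real} y \<partial>lborel)
     \<le> ennreal (2 * ln 3 + 16) + (\<integral>\<^sup>+y. ln_minus (cmod (poly q' (of_real y))) * indicator {-1..1::real} y \<partial>lborel)"
    unfolding p q'_def s_def by (rule nn_integral_ln_minus_poly_linear_mult)
  also have "\<dots> \<le> ennreal (2 * ln 3 + 16) + (ennreal ((2 * ln 3 + 16) * d) + 2 * ennreal (- ln (coeff_norm_sum p)))"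
    using IH by (rule add_left_mono)
  also have "\<dots> = ennreal ((2 * ln 3 + 16) * degree p) + 2 * ennreal (- ln (coeff_norm_sum p))"
  proof -
    have "ennreal (2 * ln 3 + 16) + ennreal ((2 * ln 3 + 16) * d) = ennreal ((2 * ln 3 + 16) * degree p)"
      using Suc(2)[symmetric] by (subst ennreal_plus[symmetric]) (auto simp: distrib_left)
    then show ?thesis
      by (simp add: add.assoc[symmetric])
  qed
  finally show ?case .
qed

lemma nn_integral_ln_minus_poly:
  fixes p :: "real poly"
  assumes "degree p \<le> d"
  shows "(\<integral>\<^sup>+y. ln_minus (poly p y) * indicator {-1..1::real} y \<partial>lborel)
    \<le> ennreal ((2 * ln 3 + 16) * d) + 2 * ln_minus (coeff p j)"
proof (cases "coeff p j = 0")
  case True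
  then show ?thesis
    by (simp add: ln_minus_def)
next
  case False
  define pc where "pc = map_poly complex_of_real p"
  have "p \<noteq> 0"
    using False by auto
  then have "pc \<noteq> 0" "degree pc = degree p"
    by (simp_all add: pc_def degree_map_poly map_poly_eq_0_iff)
  have poly_pc: "poly pc (of_real y) = of_real (poly p y)" for y
    unfolding pc_def by (induction p) (auto simp: map_poly_pCons)
  have "\<bar>coeff p j\<bar> \<le> coeff_norm_sum pc"
    using norm_coeff_le_coeff_norm_sum[of pc j] by (simp add: pc_def coeff_map_poly)
  then have "ennreal (- ln (coeff_norm_sum pc)) \<le> ln_minus (coeff p j)"
    using False by (simp add: ln_minus_nonzero ennreal_leI)
  moreover have "ennreal ((2 * ln 3 + 16) * degree pc) \<le> ennreal ((2 * ln 3 + 16) * d)"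
    using assms \<open>degree pc = degree p\<close> by (intro ennreal_leI mult_left_mono) auto
  ultimately have "ennreal ((2 * ln 3 + 16) * degree pc) + 2 * ennreal (- ln (coeff_norm_sum pc))
      \<le> ennreal ((2 * ln 3 + 16) * d) + 2 * ln_minus (coeff p j)"
    by (intro add_mono mult_left_mono) auto
  with nn_integral_ln_minus_cpoly[OF \<open>pc \<noteq> 0\<close>] show ?thesis
    by (simp add: poly_pc)
qed

section \<open>Logarithmic integrability of real polynomials on a cube\<close>

inductive polyfun :: "'i set \<Rightarrow> (('i \<Rightarrow> real) \<Rightarrow> real) \<Rightarrow> bool" for I where
  polyfun_const: "polyfun I (\<lambda>_. c)"
| polyfun_var: "i \<in> I \<Longrightarrow> polyfun I (\<lambda>f. f i)"
| polyfun_add: "polyfun I p \<Longrightarrow> polyfun I q \<Longrightarrow> polyfun I (\<lambda>f. p f + q f)"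
| polyfun_mult: "polyfun I p \<Longrightarrow> polyfun I q \<Longrightarrow> polyfun I (\<lambda>f. p f * q f)"

lemma polyfun_cong: "polyfun I q \<Longrightarrow> (\<forall>k\<in>I. f k = g k) \<Longrightarrow> q f = q g"
  by (induction rule: polyfun.induct) auto

lemma polyfun_sum: "finite S \<Longrightarrow> (\<And>s. s \<in> S \<Longrightarrow> polyfun I (p s)) \<Longrightarrow> polyfun I (\<lambda>f. \<Sum>s\<in>S. p s f)"
  by (induction S rule: finite_induct) (auto intro!: polyfun_const polyfun_add)

lemma polyfun_power: "polyfun I p \<Longrightarrow> polyfun I (\<lambda>f. p f ^ n)"
  by (induction n) (auto intro!: polyfun_const polyfun_mult)

lemma polyfun_diff: "polyfun I p \<Longrightarrow> polyfun I q \<Longrightarrow> polyfun I (\<lambda>f. p f - q f)"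
  using polyfun_add[of I p "\<lambda>f. (-1) * q f"] polyfun_mult[of I "\<lambda>_. -1" q] polyfun_const[of I "-1"]
  by simp

lemma polyfun_measurable: "polyfun I q \<Longrightarrow> q \<in> borel_measurable (PiM I (\<lambda>_. lborel))"
  by (induction rule: polyfun.induct) auto

lemma polyfun_as_poly:
  assumes "polyfun (insert i I) q"
  shows "\<exists>Q d. (\<forall>j. polyfun I (\<lambda>f. coeff (Q f) j)) \<and> (\<forall>f. degree (Q f) \<le> d) \<and> (\<forall>f. q f = poly (Q f) (f i))"
  using assms
proof (induction rule: polyfun.induct)
  case (polyfun_const c)
  have "polyfun I (\<lambda>f. coeff [:c:] j)" for j
    by (rule polyfun.polyfun_const)
  then show ?case
    by (intro exI[of _ "\<lambda>_. [:c:]"] exI[of _ 0]) auto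
next
  case (polyfun_var k)
  show ?case
  proof (cases "k = i")
    case True
    have "polyfun I (\<lambda>f. coeff [:0, 1:] j)" for j
      by (rule polyfun.polyfun_const)
    with True show ?thesis
      by (intro exI[of _ "\<lambda>_. [:0, 1:]"] exI[of _ 1]) auto
  next
    case False
    with polyfun_var have "k \<in> I"
      by simp
    then have "polyfun I (\<lambda>f. coeff [:f k:] j)" for j
      by (cases j) (simp_all add: polyfun.polyfun_var polyfun.polyfun_const)
    then show ?thesis
      by (intro exI[of _ "\<lambda>f. [:f k:]"] exI[of _ 0]) auto
  qed
next
  case (polyfun_add p q)
  then obtain Q1 d1 Q2 d2 where
    1: "\<forall>j. polyfun I (\<lambda>f. coeff (Q1 f) j)" "\<forall>f. degree (Q1 f) \<le> d1" "\<forall>f. p f = poly (Q1 f) (f i)" and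
    2: "\<forall>j. polyfun I (\<lambda>f. coeff (Q2 f) j)" "\<forall>f. degree (Q2 f) \<le> d2" "\<forall>f. q f = poly (Q2 f) (f i)"
    by blast
  have "degree (Q1 f + Q2 f) \<le> max d1 d2" for f
    using 1(2) 2(2) by (meson degree_add_le le_trans max.cobounded1 max.cobounded2)
  moreover have "polyfun I (\<lambda>f. coeff (Q1 f + Q2 f) j)" for j
    using 1(1) 2(1) by (simp add: polyfun.polyfun_add)
  ultimately show ?case
    using 1(3) 2(3) by (intro exI[of _ "\<lambda>f. Q1 f + Q2 f"] exI[of _ "max d1 d2"]) auto
next
  case (polyfun_mult p q)
  then obtain Q1 d1 Q2 d2 where
    1: "\<forall>j. polyfun I (\<lambda>f. coeff (Q1 f) j)" "\<forall>f. degree (Q1 f) \<le> d1" "\<forall>f. p f = poly (Q1 f) (f i)" and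
    2: "\<forall>j. polyfun I (\<lambda>f. coeff (Q2 f) j)" "\<forall>f. degree (Q2 f) \<le> d2" "\<forall>f. q f = poly (Q2 f) (f i)"
    by blast
  have "polyfun I (\<lambda>f. coeff (Q1 f) k * coeff (Q2 f) l)" for k l
    using 1(1) 2(1) by (intro polyfun.polyfun_mult) auto
  then have "polyfun I (\<lambda>f. coeff (Q1 f * Q2 f) j)" for j
    unfolding coeff_mult by (intro polyfun_sum) auto
  moreover have "degree (Q1 f * Q2 f) \<le> d1 + d2" for f
    using 1(2) 2(2) degree_mult_le[of "Q1 f" "Q2 f"] by (meson add_mono le_trans)
  ultimately show ?case
    using 1(3) 2(3) by (intro exI[of _ "\<lambda>f. Q1 f * Q2 f"] exI[of _ "d1 + d2"]) auto
qed

definition cube_indicator :: "'i set \<Rightarrow> ('i \<Rightarrow> real) \<Rightarrow> ennreal" where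
  "cube_indicator I f = (\<Prod>k\<in>I. indicator {-1..1} (f k))"

lemma borel_measurable_cube_indicator [measurable]:
  "cube_indicator I \<in> borel_measurable (PiM I (\<lambda>_. lborel))"
  unfolding cube_indicator_def by (intro borel_measurable_prod_ennreal) measurable

lemma nn_integral_cube_indicator:
  assumes "finite I"
  shows "(\<integral>\<^sup>+f. cube_indicator I f \<partial>PiM I (\<lambda>_. lborel)) = 2 ^ card I"
proof -
  interpret product_sigma_finite "\<lambda>_. lborel :: real measure"
    by standard
  show ?thesis
    unfolding cube_indicator_def using assms by (subst product_nn_integral_prod) auto
qed

lemma cube_indicator_insert:
  assumes "finite I" "i \<notin> I"
  shows "cube_indicator (insert i I) (x(i := y)) = indicator {-1..1} y * cube_indicator I x"
proof -
  have "(\<Prod>k\<in>I. indicator {-1..1} ((x(i := y)) k)) = (\<Prod>k\<in>I. indicator {-1..1} (x k) :: ennreal)"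
    using assms(2) by (intro prod.cong) auto
  with assms show ?thesis
    unfolding cube_indicator_def by simp
qed

lemma nn_integral_cube_indicator_insert:
  fixes I :: "'i set"
  assumes "finite I" "i \<notin> I" and F: "F \<in> borel_measurable (PiM (insert i I) (\<lambda>_. lborel))"
  shows "(\<integral>\<^sup>+f. F f * cube_indicator (insert i I) f \<partial>PiM (insert i I) (\<lambda>_. lborel))
    = (\<integral>\<^sup>+x. cube_indicator I x * (\<integral>\<^sup>+y. F (x(i := y)) * indicator {-1..1} y \<partial>lborel) \<partial>PiM I (\<lambda>_. lborel))"
proof -
  interpret product_sigma_finite "\<lambda>_. lborel :: real measure"
    by standard
  have "(\<integral>\<^sup>+f. F f * cube_indicator (insert i I) f \<partial>PiM (insert i I) (\<lambda>_. lborel))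
     = (\<integral>\<^sup>+x. (\<integral>\<^sup>+y. F (x(i := y)) * cube_indicator (insert i I) (x(i := y)) \<partial>lborel) \<partial>PiM I (\<lambda>_. lborel))"
    using assms by (intro product_nn_integral_insert) auto
  also have "\<dots> = (\<integral>\<^sup>+x. cube_indicator I x * (\<integral>\<^sup>+y. F (x(i := y)) * indicator {-1..1} y \<partial>lborel) \<partial>PiM I (\<lambda>_. lborel))"
  proof (rule nn_integral_cong)
    fix x :: "'i \<Rightarrow> real"
    assume x: "x \<in> space (PiM I (\<lambda>_. lborel))"
    have "(\<lambda>y::real. F (x(i := y))) \<in> borel_measurable lborel"
      using measurable_compose[OF measurable_component_update[OF x assms(2)] F] by simp
    then have "(\<integral>\<^sup>+y. cube_indicator I x * (F (x(i := y)) * indicator {-1..1} y) \<partial>lborel)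
        = cube_indicator I x * (\<integral>\<^sup>+y. F (x(i := y)) * indicator {-1..1} y \<partial>lborel)"
      by (intro nn_integral_cmult) simp
    then show "(\<integral>\<^sup>+y. F (x(i := y)) * cube_indicator (insert i I) (x(i := y)) \<partial>lborel)
        = cube_indicator I x * (\<integral>\<^sup>+y. F (x(i := y)) * indicator {-1..1} y \<partial>lborel)"
      using assms(1,2) by (simp add: cube_indicator_insert mult_ac)
  qed
  finally show ?thesis .
qed

text \<open>Induction on the variables: by \<open>nn_integral_ln_minus_poly\<close> the integral in the last
  variable is bounded in terms of one coefficient, which is again a polynomial function not
  vanishing identically.\<close>

lemma nn_integral_ln_minus_polyfun_finite:
  assumes "finite I" "polyfun I q" "q f0 \<noteq> 0"
  shows "(\<integral>\<^sup>+f. ln_minus (q f) * cube_indicator I f \<partial>PiM I (\<lambda>_. lborel)) < \<infinity>"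
  using assms
proof (induction I arbitrary: q f0 rule: finite_induct)
  case empty
  have "q (\<lambda>_. undefined) \<noteq> 0"
    using polyfun_cong[OF empty(1), of "\<lambda>_. undefined" f0] empty(2) by auto
  then show ?case
    by (simp add: PiM_empty nn_integral_count_space_finite cube_indicator_def ln_minus_def)
next
  case (insert i I)
  obtain Q d where Q_coeff: "\<forall>j. polyfun I (\<lambda>f. coeff (Q f) j)" and Q_deg: "\<forall>f. degree (Q f) \<le> d"
      and q_Q: "\<forall>f. q f = poly (Q f) (f i)"
    using polyfun_as_poly[OF insert(4)] by blast
  have Q_upd: "Q (x(i := y)) = Q x" for x y
    using polyfun_cong[OF Q_coeff[rule_format]] insert(2) by (intro poly_eqI) auto
  define c where "c f = coeff (Q f) (degree (Q f0))" for f
  have "c f0 \<noteq> 0"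
    using insert(5) q_Q unfolding c_def by (metis leading_coeff_0_iff poly_0)
  then have IH: "(\<integral>\<^sup>+f. ln_minus (c f) * cube_indicator I f \<partial>PiM I (\<lambda>_. lborel)) < \<infinity>"
    using insert(3)[of c f0] Q_coeff unfolding c_def by auto
  have [measurable]: "c \<in> borel_measurable (PiM I (\<lambda>_. lborel))"
    unfolding c_def using Q_coeff by (intro polyfun_measurable) auto
  have "q \<in> borel_measurable (PiM (insert i I) (\<lambda>_. lborel))"
    by (rule polyfun_measurable[OF insert(4)])
  then have "(\<lambda>f. ln_minus (q f)) \<in> borel_measurable (PiM (insert i I) (\<lambda>_. lborel))"
    by measurable
  then have "(\<integral>\<^sup>+f. ln_minus (q f) * cube_indicator (insert i I) f \<partial>PiM (insert i I) (\<lambda>_. lborel))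
     = (\<integral>\<^sup>+x. cube_indicator I x * (\<integral>\<^sup>+y. ln_minus (poly (Q x) y) * indicator {-1..1} y \<partial>lborel)
          \<partial>PiM I (\<lambda>_. lborel))"
    using q_Q by (simp add: nn_integral_cube_indicator_insert[OF insert(1,2)] Q_upd)
  also have "\<dots> \<le> (\<integral>\<^sup>+x. ennreal ((2 * ln 3 + 16) * d) * cube_indicator I x
          + 2 * (ln_minus (c x) * cube_indicator I x) \<partial>PiM I (\<lambda>_. lborel))"
  proof (rule nn_integral_mono)
    fix x
    have "cube_indicator I x * (\<integral>\<^sup>+y. ln_minus (poly (Q x) y) * indicator {-1..1} y \<partial>lborel)
        \<le> cube_indicator I x * (ennreal ((2 * ln 3 + 16) * d) + 2 * ln_minus (c x))"
      unfolding c_def using Q_deg by (intro mult_left_mono nn_integral_ln_minus_poly) auto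
    then show "cube_indicator I x * (\<integral>\<^sup>+y. ln_minus (poly (Q x) y) * indicator {-1..1} y \<partial>lborel)
        \<le> ennreal ((2 * ln 3 + 16) * d) * cube_indicator I x + 2 * (ln_minus (c x) * cube_indicator I x)"
      by (simp add: algebra_simps)
  qed
  also have "\<dots> = ennreal ((2 * ln 3 + 16) * d) * 2 ^ card I
      + 2 * (\<integral>\<^sup>+x. ln_minus (c x) * cube_indicator I x \<partial>PiM I (\<lambda>_. lborel))"
    using insert(1) by (simp add: nn_integral_add nn_integral_cmult nn_integral_cube_indicator)
  also have "\<dots> < \<infinity>"
    using IH by (simp add: ennreal_mult_less_top ennreal_mult_eq_top_iff power_less_top_ennreal)
  finally show ?case .
qed

lemma vector_4 [simp]:
  "(vector [x, y, z, w] :: 'a::zero^4) $ 1 = x"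
  "(vector [x, y, z, w] :: 'a::zero^4) $ 2 = y"
  "(vector [x, y, z, w] :: 'a::zero^4) $ 3 = z"
  "(vector [x, y, z, w] :: 'a::zero^4) $ 4 = w"
  unfolding vector_def by simp_all

lemma qmult_component:
  "qmult p q $ 1 = p$1 * q$1 - p$2 * q$2 - p$3 * q$3 - p$4 * q$4"
  "qmult p q $ 2 = p$1 * q$2 + p$2 * q$1 + p$3 * q$4 - p$4 * q$3"
  "qmult p q $ 3 = p$1 * q$3 - p$2 * q$4 + p$3 * q$1 + p$4 * q$2"
  "qmult p q $ 4 = p$1 * q$4 + p$2 * q$3 - p$3 * q$2 + p$4 * q$1"
  unfolding qmult_def by simp_all

lemma qone_component [simp]: "qone $ 1 = 1" "qone $ 2 = 0" "qone $ 3 = 0" "qone $ 4 = 0"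
  unfolding qone_def by simp_all

lemma vec4_eqI:
  "(x::real^4) $ 1 = y $ 1 \<Longrightarrow> x $ 2 = y $ 2 \<Longrightarrow> x $ 3 = y $ 3 \<Longrightarrow> x $ 4 = y $ 4 \<Longrightarrow> x = y"
  by (simp add: vec_eq_iff forall_4)

lemma qmult_add_left: "qmult (p + p') q = qmult p q + qmult p' q"
  by (rule vec4_eqI) (simp_all add: qmult_component algebra_simps)

lemma qmult_add_right: "qmult q (p + p') = qmult q p + qmult q p'"
  by (rule vec4_eqI) (simp_all add: qmult_component algebra_simps)

lemma qmult_scaleR_left: "qmult (c *\<^sub>R p) q = c *\<^sub>R qmult p q"
  by (rule vec4_eqI) (simp_all add: qmult_component algebra_simps)

lemma qmult_scaleR_right: "qmult q (c *\<^sub>R p) = c *\<^sub>R qmult q p"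
  by (rule vec4_eqI) (simp_all add: qmult_component algebra_simps)

lemma bounded_bilinear_qmult: "bounded_bilinear qmult"
proof -
  have "bilinear qmult"
    unfolding bilinear_def
    by (auto intro!: linearI simp: qmult_add_left qmult_add_right qmult_scaleR_left qmult_scaleR_right)
  then show ?thesis
    by (rule bilinear_conv_bounded_bilinear[THEN iffD1])
qed

lemma norm_vec4_squared: "(norm (x::real^4))\<^sup>2 = (x$1)\<^sup>2 + (x$2)\<^sup>2 + (x$3)\<^sup>2 + (x$4)\<^sup>2"
  unfolding power2_norm_eq_inner inner_vec_def sum_4 by (simp add: power2_eq_square)

lemma norm_qmult: "norm (qmult p q) = norm p * norm q"
proof -
  have "(norm (qmult p q))\<^sup>2 = (norm p * norm q)\<^sup>2"
    unfolding power_mult_distrib norm_vec4_squared qmult_component by algebra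
  then show ?thesis
    by (simp add: power2_eq_iff_nonneg)
qed

lemma norm_qone [simp]: "norm qone = 1"
  using norm_vec4_squared[of qone] norm_ge_zero[of qone] by (simp add: power2_eq_1_iff)

lemma qpow_0 [simp]: "qpow p 0 = qone"
  by (simp add: qpow_def)

lemma qpow_Suc: "qpow p (Suc l) = qmult p (qpow p l)"
  by (simp add: qpow_def)

lemma norm_qpow: "norm (qpow p l) = norm p ^ l"
  by (induction l) (simp_all add: qpow_Suc norm_qmult)

lemma qpow_scaleR: "qpow (c *\<^sub>R p) l = c ^ l *\<^sub>R qpow p l"
  by (induction l) (simp_all add: qpow_Suc qmult_scaleR_left qmult_scaleR_right)

lemma continuous_on_qmult [continuous_intros]:
  "continuous_on S f \<Longrightarrow> continuous_on S g \<Longrightarrow> continuous_on S (\<lambda>x. qmult (f x) (g x))"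
  by (rule bounded_bilinear.continuous_on[OF bounded_bilinear_qmult])

lemma continuous_on_qpow [continuous_intros]:
  "continuous_on S f \<Longrightarrow> continuous_on S (\<lambda>x. qpow (f x) l)"
  by (induction l) (auto simp: qpow_Suc intro!: continuous_intros)

lemma borel_measurable_qpoly2 [measurable]:
  "(\<lambda>p. qpoly2 n a (fst p) (snd p)) \<in> borel_measurable borel"
  unfolding qpoly2_def by (intro borel_measurable_continuous_onI continuous_intros)

lemma norm_qpoly2_le:
  assumes "norm x \<le> 1" "norm y \<le> 1"
  shows "norm (qpoly2 n a x y) \<le> (\<Sum>l1\<le>n. \<Sum>l2\<le>n. norm (a l1 l2))"
  unfolding qpoly2_def
proof (intro order.trans[OF norm_sum] sum_mono order.trans[OF norm_sum])
  fix l1 l2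
  have "norm (qpow x l1) \<le> 1" "norm (qpow y l2) \<le> 1"
    using assms by (simp_all add: norm_qpow power_le_one)
  then show "norm (qmult (qmult (qpow x l1) (qpow y l2)) (a l1 l2)) \<le> norm (a l1 l2)"
    by (simp add: norm_qmult mult_le_one mult_left_le_one_le)
qed

section \<open>The complex slice\<close>

text \<open>Every quaternion is \<open>p = quat_cfst p + quat_csnd p \<cdot> j\<close> with complex components, and left
  multiplication by a complex number multiplies both components.\<close>

definition quat_of_complex :: "complex \<Rightarrow> real^4" where
  "quat_of_complex w = vector [Re w, Im w, 0, 0]"

definition quat_cfst :: "real^4 \<Rightarrow> complex" where
  "quat_cfst p = Complex (p$1) (p$2)"

definition quat_csnd :: "real^4 \<Rightarrow> complex" where
  "quat_csnd p = Complex (p$3) (p$4)"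

lemma quat_of_complex_component [simp]:
  "quat_of_complex w $ 1 = Re w" "quat_of_complex w $ 2 = Im w"
  "quat_of_complex w $ 3 = 0" "quat_of_complex w $ 4 = 0"
  unfolding quat_of_complex_def by simp_all

lemma qmult_quat_of_complex: "qmult (quat_of_complex u) (quat_of_complex w) = quat_of_complex (u * w)"
  by (rule vec4_eqI) (simp_all add: qmult_component)

lemma qpow_quat_of_complex: "qpow (quat_of_complex w) l = quat_of_complex (w ^ l)"
proof -
  have "qone = quat_of_complex 1"
    by (rule vec4_eqI) simp_all
  then show ?thesis
    by (induction l) (simp_all add: qpow_Suc qmult_quat_of_complex)
qed

lemma scaleR_quat_of_complex: "c *\<^sub>R quat_of_complex w = quat_of_complex (of_real c * w)"
  by (rule vec4_eqI) simp_all

lemma norm_quat_of_complex [simp]: "norm (quat_of_complex w) = cmod w"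
proof -
  have "(norm (quat_of_complex w))\<^sup>2 = (cmod w)\<^sup>2"
    unfolding norm_vec4_squared by (simp add: cmod_power2)
  then show ?thesis
    by (simp add: power2_eq_iff_nonneg)
qed

lemma quat_eq_0_iff_components: "p = 0 \<longleftrightarrow> quat_cfst p = 0 \<and> quat_csnd p = 0"
  by (auto simp: quat_cfst_def quat_csnd_def complex_eq_iff intro: vec4_eqI)

lemma quat_component_qpoly2_complex:
  assumes "proj \<in> {quat_cfst, quat_csnd}"
  shows "proj (qpoly2 n a (quat_of_complex z) (quat_of_complex w))
    = (\<Sum>l1\<le>n. \<Sum>l2\<le>n. z ^ l1 * w ^ l2 * proj (a l1 l2))"
proof -
  have add: "proj (p + p') = proj p + proj p'" for p p'
    using assms by (auto simp: quat_cfst_def quat_csnd_def complex_eq_iff)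
  have sum: "proj (\<Sum>i\<in>S. f i) = (\<Sum>i\<in>S. proj (f i))" for S and f :: "'b \<Rightarrow> real^4"
    using assms by (induction S rule: infinite_finite_induct)
      (auto simp: add quat_cfst_def quat_csnd_def complex_eq_iff)
  have left_mult: "proj (qmult (quat_of_complex u) p) = u * proj p" for u p
    using assms by (auto simp: quat_cfst_def quat_csnd_def qmult_component complex_eq_iff)
  show ?thesis
    unfolding qpoly2_def sum qpow_quat_of_complex qmult_quat_of_complex left_mult ..
qed

lemma infinite_unit_circle: "infinite (sphere (0::complex) 1)"
proof
  assume "finite (sphere (0::complex) 1)"
  moreover have "connected (sphere (0::complex) 1)"
    by (rule connected_sphere) simp
  ultimately have "sphere (0::complex) 1 = {} \<or> (\<exists>a. sphere (0::complex) 1 = {a})"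
    using connected_finite_iff_sing by blast
  moreover have "1 \<in> sphere (0::complex) 1" "-1 \<in> sphere (0::complex) 1"
    by simp_all
  moreover have "(1::complex) \<noteq> -1"
    by simp
  ultimately show False
    by (metis empty_iff singletonD)
qed

lemma unit_complex_avoiding:
  assumes "finite B"
  obtains z :: complex where "cmod z = 1" "z \<notin> B"
proof -
  have "infinite (sphere (0::complex) 1 - B)"
    using infinite_unit_circle assms by (rule Diff_infinite_finite[rotated])
  then obtain z where "z \<in> sphere 0 1 - B"
    by (metis ex_in_conv finite.emptyI)
  then show ?thesis
    using that by auto
qed

lemma finite_roots_sum_powers:
  fixes c :: "nat \<Rightarrow> complex"
  assumes "l \<le> n" "c l \<noteq> 0"
  shows "finite {x. (\<Sum>k\<le>n. c k * x ^ k) = 0}"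
proof -
  define p where "p = (\<Sum>k\<le>n. monom (c k) k)"
  have "coeff p l = c l"
    using assms(1) by (simp add: p_def coeff_sum coeff_monom)
  then have "p \<noteq> 0"
    using assms(2) by auto
  then show ?thesis
    using poly_roots_finite[of p] by (simp add: p_def poly_sum poly_monom)
qed

lemma unit_complex_avoiding_roots:
  fixes c :: "'t \<Rightarrow> nat \<Rightarrow> complex"
  assumes "finite T" "\<And>t. t \<in> T \<Longrightarrow> \<exists>l\<le>n. c t l \<noteq> 0"
  obtains z where "cmod z = 1"
    "\<And>t \<sigma>. t \<in> T \<Longrightarrow> \<sigma> \<in> {1, -1} \<Longrightarrow> (\<Sum>k\<le>n. c t k * (\<sigma> * z) ^ k) \<noteq> 0"
proof -
  define R where "R t = {x. (\<Sum>k\<le>n. c t k * x ^ k) = 0}" for t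
  have "finite (R t)" if t: "t \<in> T" for t
  proof -
    obtain l where "l \<le> n" "c t l \<noteq> 0"
      using assms(2)[OF t] by blast
    then show ?thesis
      unfolding R_def by (rule finite_roots_sum_powers)
  qed
  then have "finite (\<Union>t\<in>T. R t \<union> uminus ` R t)"
    using assms(1) by auto
  then obtain z where z: "cmod z = 1" "z \<notin> (\<Union>t\<in>T. R t \<union> uminus ` R t)"
    by (rule unit_complex_avoiding)
  show ?thesis
  proof (rule that[OF z(1)])
    fix t and \<sigma> :: complex
    assume t: "t \<in> T" and \<sigma>: "\<sigma> \<in> {1, -1}"
    have "\<sigma> * z \<notin> R t"
    proof
      assume "\<sigma> * z \<in> R t"
      then have "z \<in> R t \<union> uminus ` R t"
        using \<sigma> image_eqI[of z uminus "-z" "R t"] by auto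
      with z(2) t show False
        by blast
    qed
    then show "(\<Sum>k\<le>n. c t k * (\<sigma> * z) ^ k) \<noteq> 0"
      unfolding R_def by simp
  qed
qed

text \<open>Choose \<open>w\<close> first, so that the coefficient of \<open>z\<^bsup>l0\<^esup>\<close> does not vanish, then \<open>z\<close>.\<close>

lemma complex_poly2_nonvanishing_on_torus:
  fixes \<gamma> :: "nat \<Rightarrow> nat \<Rightarrow> complex"
  assumes "l0 \<le> n" "m0 \<le> n" "\<gamma> l0 m0 \<noteq> 0"
  obtains z w where "cmod z = 1" "cmod w = 1"
    "\<And>\<sigma> \<tau>. \<sigma> \<in> {1, -1} \<Longrightarrow> \<tau> \<in> {1, -1} \<Longrightarrow> (\<Sum>l1\<le>n. \<Sum>l2\<le>n. (\<sigma> * z) ^ l1 * (\<tau> * w) ^ l2 * \<gamma> l1 l2) \<noteq> 0"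
proof -
  have "\<exists>m\<le>n. \<gamma> l0 m \<noteq> 0"
    using assms(2,3) by blast
  then obtain w where w: "cmod w = 1"
    "\<And>t \<tau>. t \<in> {l0} \<Longrightarrow> \<tau> \<in> {1, -1} \<Longrightarrow> (\<Sum>m\<le>n. \<gamma> t m * (\<tau> * w) ^ m) \<noteq> 0"
    using unit_complex_avoiding_roots[of "{l0}" n \<gamma>] by auto
  define h where "h \<tau> l = (\<Sum>l2\<le>n. (\<tau> * w) ^ l2 * \<gamma> l l2)" for \<tau> :: complex and l
  have "h \<tau> l0 \<noteq> 0" if "\<tau> \<in> {1, -1}" for \<tau>
    using w(2)[OF _ that] unfolding h_def by (simp add: mult.commute)
  then have "\<exists>l\<le>n. h \<tau> l \<noteq> 0" if "\<tau> \<in> {1, -1}" for \<tau>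
    using assms(1) that by blast
  then obtain z where z: "cmod z = 1"
    "\<And>\<tau> \<sigma>. \<tau> \<in> {1, -1} \<Longrightarrow> \<sigma> \<in> {1, -1} \<Longrightarrow> (\<Sum>l\<le>n. h \<tau> l * (\<sigma> * z) ^ l) \<noteq> 0"
    using unit_complex_avoiding_roots[of "{1, -1}" n h] by auto
  have sum_eq: "(\<Sum>l1\<le>n. \<Sum>l2\<le>n. (\<sigma> * z) ^ l1 * (\<tau> * w) ^ l2 * \<gamma> l1 l2) = (\<Sum>l\<le>n. h \<tau> l * (\<sigma> * z) ^ l)"
    for \<sigma> \<tau>
    unfolding h_def by (simp add: sum_distrib_left sum_distrib_right mult_ac)
  show ?thesis
  proof (rule that[OF z(1) w(1)])
    fix \<sigma> \<tau> :: complex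
    assume "\<sigma> \<in> {1, -1}" "\<tau> \<in> {1, -1}"
    then show "(\<Sum>l1\<le>n. \<Sum>l2\<le>n. (\<sigma> * z) ^ l1 * (\<tau> * w) ^ l2 * \<gamma> l1 l2) \<noteq> 0"
      unfolding sum_eq using z(2)[of \<tau> \<sigma>] by simp
  qed
qed

lemma qpoly2_nonvanishing_on_complex_torus:
  assumes "\<exists>l1\<le>n. \<exists>l2\<le>n. a l1 l2 \<noteq> 0"
  obtains z w where "cmod z = 1" "cmod w = 1"
    "\<And>\<sigma> \<tau>. \<sigma> \<in> {1, -1::real} \<Longrightarrow> \<tau> \<in> {1, -1::real} \<Longrightarrow>
      qpoly2 n a (\<sigma> *\<^sub>R quat_of_complex z) (\<tau> *\<^sub>R quat_of_complex w) \<noteq> 0"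
proof -
  obtain l0 m0 where lm: "l0 \<le> n" "m0 \<le> n" "a l0 m0 \<noteq> 0"
    using assms by blast
  then obtain proj where proj: "proj \<in> {quat_cfst, quat_csnd}" "proj (a l0 m0) \<noteq> 0"
    using quat_eq_0_iff_components by blast
  obtain z w where zw: "cmod z = 1" "cmod w = 1"
    "\<And>\<sigma> \<tau>. \<sigma> \<in> {1, -1} \<Longrightarrow> \<tau> \<in> {1, -1} \<Longrightarrow>
      (\<Sum>l1\<le>n. \<Sum>l2\<le>n. (\<sigma> * z) ^ l1 * (\<tau> * w) ^ l2 * proj (a l1 l2)) \<noteq> 0"
    using complex_poly2_nonvanishing_on_torus[OF lm(1,2), of "\<lambda>l m. proj (a l m)"] proj(2) by blast
  have "qpoly2 n a (\<sigma> *\<^sub>R quat_of_complex z) (\<tau> *\<^sub>R quat_of_complex w) \<noteq> 0"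
    if "\<sigma> \<in> {1, -1::real}" "\<tau> \<in> {1, -1::real}" for \<sigma> \<tau>
  proof
    assume "qpoly2 n a (\<sigma> *\<^sub>R quat_of_complex z) (\<tau> *\<^sub>R quat_of_complex w) = 0"
    then have "proj (qpoly2 n a (quat_of_complex (of_real \<sigma> * z)) (quat_of_complex (of_real \<tau> * w))) = 0"
      using proj(1) by (auto simp: scaleR_quat_of_complex quat_cfst_def quat_csnd_def complex_eq_iff)
    moreover have "of_real \<sigma> \<in> {1, -1::complex}" "of_real \<tau> \<in> {1, -1::complex}"
      using that by auto
    ultimately show False
      using zw(3) unfolding quat_component_qpoly2_complex[OF proj(1)] by blast
  qed
  with zw(1,2) that show ?thesis
    by blast
qed

section \<open>Clearing the normalisation by a product over signs\<close>

text \<open>In the homogenisation below, \<open>r\<close> and \<open>s\<close> stand for \<open>\<plusminus>norm u\<close> and \<open>\<plusminus>norm v\<close>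
  (see \<open>qpoly2_homog_sign\<close>); as independent variables they make its squared norm a real
  polynomial.\<close>

definition qpoly2_homog :: "nat \<Rightarrow> (nat \<Rightarrow> nat \<Rightarrow> real^4) \<Rightarrow> real \<Rightarrow> real \<Rightarrow> real^4 \<Rightarrow> real^4 \<Rightarrow> real^4" where
  "qpoly2_homog n a r s u v = (\<Sum>l1\<le>n. \<Sum>l2\<le>n.
     (r ^ (2*n - l1) * s ^ (2*n - l2)) *\<^sub>R qmult (qmult (qpow u l1) (qpow v l2)) (a l1 l2))"

lemma power_diff_sign:
  fixes \<sigma> :: "'a::comm_monoid_mult"
  assumes "\<sigma>^2 = 1" "l \<le> 2*n"
  shows "\<sigma> ^ (2*n - l) = \<sigma> ^ l"
proof -
  have "\<sigma> ^ (2*n - l) = \<sigma> ^ (2*n - l) * (\<sigma>^2) ^ l"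
    using assms(1) by simp
  also have "\<dots> = (\<sigma>^2) ^ n * \<sigma> ^ l"
    using assms(2) by (simp add: power_add[symmetric] power_mult[symmetric] mult.commute)
  finally show ?thesis
    using assms(1) by simp
qed

lemma scaleR_qpow_sign_norm:
  fixes \<sigma> :: real
  assumes "\<sigma>^2 = 1" "l \<le> n"
  shows "(\<sigma> * norm u) ^ (2*n - l) *\<^sub>R qpow u l = norm u ^ (2*n) *\<^sub>R qpow (\<sigma> *\<^sub>R sgn u) l"
proof -
  have u: "u = norm u *\<^sub>R sgn u"
    by (cases "u = 0") (simp_all add: sgn_div_norm)
  have "(\<sigma> * norm u) ^ (2*n - l) * norm u ^ l = \<sigma> ^ (2*n - l) * (norm u ^ (2*n - l) * norm u ^ l)"
    by (simp add: power_mult_distrib)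
  also have "\<dots> = norm u ^ (2*n) * \<sigma> ^ l"
    using assms by (simp add: power_add[symmetric] power_diff_sign)
  finally show ?thesis
    by (subst (1) u) (simp add: qpow_scaleR)
qed

lemma qpoly2_homog_sign:
  assumes "\<sigma>^2 = 1" "\<tau>^2 = 1"
  shows "qpoly2_homog n a (\<sigma> * norm u) (\<tau> * norm v) u v
    = (norm u ^ (2*n) * norm v ^ (2*n)) *\<^sub>R qpoly2 n a (\<sigma> *\<^sub>R sgn u) (\<tau> *\<^sub>R sgn v)"
proof -
  have scaleR_qmult: "(c1 * c2) *\<^sub>R qmult (qmult A B) x = qmult (qmult (c1 *\<^sub>R A) (c2 *\<^sub>R B)) x" for c1 c2 A B x
    by (simp add: qmult_scaleR_left qmult_scaleR_right)
  show ?thesis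
    unfolding qpoly2_homog_def qpoly2_def scaleR_sum_right
  proof (intro sum.cong refl)
    fix l1 l2
    assume "l1 \<in> {..n}" "l2 \<in> {..n}"
    then show "((\<sigma> * norm u) ^ (2*n - l1) * (\<tau> * norm v) ^ (2*n - l2)) *\<^sub>R
          qmult (qmult (qpow u l1) (qpow v l2)) (a l1 l2)
        = (norm u ^ (2*n) * norm v ^ (2*n)) *\<^sub>R
          qmult (qmult (qpow (\<sigma> *\<^sub>R sgn u) l1) (qpow (\<tau> *\<^sub>R sgn v) l2)) (a l1 l2)"
      unfolding scaleR_qmult
      using scaleR_qpow_sign_norm[OF assms(1), of l1 n u] scaleR_qpow_sign_norm[OF assms(2), of l2 n v]
      by simp
  qed
qed

definition polyfun_vec4 :: "'i set \<Rightarrow> (('i \<Rightarrow> real) \<Rightarrow> real^4) \<Rightarrow> bool" where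
  "polyfun_vec4 I F \<longleftrightarrow> (\<forall>k. polyfun I (\<lambda>e. F e $ k))"

lemma polyfun_vec4_const: "polyfun_vec4 I (\<lambda>_. c)"
  unfolding polyfun_vec4_def by (auto intro: polyfun_const)

lemma polyfun_vec4_qmult:
  assumes "polyfun_vec4 I F" "polyfun_vec4 I G"
  shows "polyfun_vec4 I (\<lambda>e. qmult (F e) (G e))"
proof -
  have "polyfun I (\<lambda>e. F e $ i * G e $ j)" for i j
    using assms unfolding polyfun_vec4_def by (intro polyfun_mult) auto
  then show ?thesis
    unfolding polyfun_vec4_def by (auto simp: forall_4 qmult_component intro!: polyfun_add polyfun_diff)
qed

lemma polyfun_vec4_qpow: "polyfun_vec4 I F \<Longrightarrow> polyfun_vec4 I (\<lambda>e. qpow (F e) l)"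
  by (induction l) (auto simp: qpow_Suc polyfun_vec4_const intro: polyfun_vec4_qmult)

lemma polyfun_vec4_scaleR: "polyfun I g \<Longrightarrow> polyfun_vec4 I F \<Longrightarrow> polyfun_vec4 I (\<lambda>e. g e *\<^sub>R F e)"
  unfolding polyfun_vec4_def by (auto intro: polyfun_mult)

lemma polyfun_vec4_sum:
  "finite S \<Longrightarrow> (\<And>s. s \<in> S \<Longrightarrow> polyfun_vec4 I (F s)) \<Longrightarrow> polyfun_vec4 I (\<lambda>e. \<Sum>s\<in>S. F s e)"
  unfolding polyfun_vec4_def by (auto intro!: polyfun_sum)

lemma polyfun_norm_squared: "polyfun_vec4 I F \<Longrightarrow> polyfun I (\<lambda>e. (norm (F e))\<^sup>2)"
  unfolding polyfun_vec4_def norm_vec4_squared by (intro polyfun_add polyfun_power) auto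

type_synonym quat2 = "(real^4) \<times> (real^4)"

text \<open>A point of \<open>quat2\<close> is encoded by its coordinate function on \<open>Basis\<close>; these recover
  its two quaternions.\<close>

definition quat2_fst :: "(quat2 \<Rightarrow> real) \<Rightarrow> real^4" where
  "quat2_fst w = (\<chi> k. w (axis k 1, 0))"

definition quat2_snd :: "(quat2 \<Rightarrow> real) \<Rightarrow> real^4" where
  "quat2_snd w = (\<chi> k. w (0, axis k 1))"

lemma quat2_fst_coordinates [simp]: "quat2_fst (\<lambda>b. z \<bullet> b) = fst z"
  by (simp add: quat2_fst_def vec_eq_iff inner_Pair_0 inner_axis)

lemma quat2_snd_coordinates [simp]: "quat2_snd (\<lambda>b. z \<bullet> b) = snd z"
  by (simp add: quat2_snd_def vec_eq_iff inner_Pair_0 inner_axis)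

lemma axis_Pair_in_Basis: "((axis k 1, 0) :: quat2) \<in> Basis" "((0, axis k 1) :: quat2) \<in> Basis"
proof -
  have "(axis k 1 :: real^4) \<in> Basis"
    unfolding Basis_vec_def by auto
  then show "((axis k 1, 0) :: quat2) \<in> Basis" "((0, axis k 1) :: quat2) \<in> Basis"
    unfolding Basis_prod_def by auto
qed

lemma polyfun_vec4_quat2_fst: "g ` Basis \<subseteq> I \<Longrightarrow> polyfun_vec4 I (\<lambda>e. quat2_fst (e \<circ> g))"
  unfolding polyfun_vec4_def quat2_fst_def using axis_Pair_in_Basis by (auto intro!: polyfun_var)

lemma polyfun_vec4_quat2_snd: "g ` Basis \<subseteq> I \<Longrightarrow> polyfun_vec4 I (\<lambda>e. quat2_snd (e \<circ> g))"
  unfolding polyfun_vec4_def quat2_snd_def using axis_Pair_in_Basis by (auto intro!: polyfun_var)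

definition extend_rs :: "('i \<Rightarrow> real) \<Rightarrow> real \<Rightarrow> real \<Rightarrow> ('i + bool \<Rightarrow> real)" where
  "extend_rs w r s = case_sum w (\<lambda>b. if b then s else r)"

lemma extend_rs_simps [simp]:
  "extend_rs w r s \<circ> Inl = w" "extend_rs w r s (Inl i) = w i"
  "extend_rs w r s (Inr False) = r" "extend_rs w r s (Inr True) = s"
  by (auto simp: extend_rs_def)

definition homog_normsq :: "nat \<Rightarrow> (nat \<Rightarrow> nat \<Rightarrow> real^4) \<Rightarrow> (quat2 + bool \<Rightarrow> real) \<Rightarrow> real" where
  "homog_normsq n a e =
     (norm (qpoly2_homog n a (e (Inr False)) (e (Inr True)) (quat2_fst (e \<circ> Inl)) (quat2_snd (e \<circ> Inl))))\<^sup>2"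

lemma homog_normsq_sign:
  fixes \<sigma> \<tau> :: real
  assumes "\<sigma>^2 = 1" "\<tau>^2 = 1"
  shows "homog_normsq n a (extend_rs (\<lambda>b. (u, v) \<bullet> b) (\<sigma> * norm u) (\<tau> * norm v))
    = (norm u * norm v) ^ (4*n) * (norm (qpoly2 n a (\<sigma> *\<^sub>R sgn u) (\<tau> *\<^sub>R sgn v)))\<^sup>2"
proof -
  have "(4::nat) * n = 2 * n * 2"
    by simp
  then have "(norm u ^ (2*n) * norm v ^ (2*n))\<^sup>2 = (norm u * norm v) ^ (4*n)"
    by (simp only: power_mult power_mult_distrib)
  then show ?thesis
    using qpoly2_homog_sign[OF assms, of n a u v]
    by (simp add: homog_normsq_def power_mult_distrib)
qed

lemma polyfun_homog_normsq: "polyfun (Inl ` Basis \<union> range Inr) (homog_normsq n a)"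
proof -
  let ?I = "Inl ` Basis \<union> range Inr :: (quat2 + bool) set"
  have "polyfun_vec4 ?I (\<lambda>e. quat2_fst (e \<circ> Inl))" "polyfun_vec4 ?I (\<lambda>e. quat2_snd (e \<circ> Inl))"
    by (auto intro!: polyfun_vec4_quat2_fst polyfun_vec4_quat2_snd)
  moreover have "polyfun ?I (\<lambda>e. e (Inr False))" "polyfun ?I (\<lambda>e. e (Inr True))"
    by (auto intro!: polyfun_var)
  ultimately show ?thesis
    unfolding homog_normsq_def qpoly2_homog_def
    by (intro polyfun_norm_squared polyfun_vec4_sum polyfun_vec4_scaleR polyfun_mult polyfun_power
        polyfun_vec4_qmult polyfun_vec4_qpow polyfun_vec4_const) auto
qed

definition sign_decomp ::
    "'i set \<Rightarrow> (('i \<Rightarrow> real) \<Rightarrow> real) \<Rightarrow> (('i \<Rightarrow> real) \<Rightarrow> real) \<Rightarrow> (('i + bool \<Rightarrow> real) \<Rightarrow> real) \<Rightarrow> bool"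
  where "sign_decomp I R1 R2 \<Phi> \<longleftrightarrow> (\<exists>p00 p10 p01 p11.
    polyfun I p00 \<and> polyfun I p10 \<and> polyfun I p01 \<and> polyfun I p11 \<and>
    (\<forall>w r s. r^2 = R1 w \<longrightarrow> s^2 = R2 w \<longrightarrow>
      \<Phi> (extend_rs w r s) = p00 w + r * p10 w + s * p01 w + r * s * p11 w))"

lemma sign_decomp_add:
  assumes "sign_decomp I R1 R2 \<Phi>" "sign_decomp I R1 R2 \<Psi>"
  shows "sign_decomp I R1 R2 (\<lambda>e. \<Phi> e + \<Psi> e)"
proof -
  obtain a00 a10 a01 a11 b00 b10 b01 b11 where
    A: "polyfun I a00" "polyfun I a10" "polyfun I a01" "polyfun I a11"
       "\<forall>w r s. r^2 = R1 w \<longrightarrow> s^2 = R2 w \<longrightarrow>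
          \<Phi> (extend_rs w r s) = a00 w + r * a10 w + s * a01 w + r * s * a11 w" and
    B: "polyfun I b00" "polyfun I b10" "polyfun I b01" "polyfun I b11"
       "\<forall>w r s. r^2 = R1 w \<longrightarrow> s^2 = R2 w \<longrightarrow>
          \<Psi> (extend_rs w r s) = b00 w + r * b10 w + s * b01 w + r * s * b11 w"
    using assms unfolding sign_decomp_def by blast
  show ?thesis
    unfolding sign_decomp_def
    by (intro exI[of _ "\<lambda>w. a00 w + b00 w"] exI[of _ "\<lambda>w. a10 w + b10 w"]
        exI[of _ "\<lambda>w. a01 w + b01 w"] exI[of _ "\<lambda>w. a11 w + b11 w"])
      (use A B in \<open>auto intro: polyfun_add simp: algebra_simps\<close>)
qed

lemma sign_decomp_mult:
  assumes "polyfun I R1" "polyfun I R2" "sign_decomp I R1 R2 \<Phi>" "sign_decomp I R1 R2 \<Psi>"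
  shows "sign_decomp I R1 R2 (\<lambda>e. \<Phi> e * \<Psi> e)"
proof -
  obtain a00 a10 a01 a11 b00 b10 b01 b11 where
    A: "polyfun I a00" "polyfun I a10" "polyfun I a01" "polyfun I a11"
       "\<forall>w r s. r^2 = R1 w \<longrightarrow> s^2 = R2 w \<longrightarrow>
          \<Phi> (extend_rs w r s) = a00 w + r * a10 w + s * a01 w + r * s * a11 w" and
    B: "polyfun I b00" "polyfun I b10" "polyfun I b01" "polyfun I b11"
       "\<forall>w r s. r^2 = R1 w \<longrightarrow> s^2 = R2 w \<longrightarrow>
          \<Psi> (extend_rs w r s) = b00 w + r * b10 w + s * b01 w + r * s * b11 w"
    using assms(3,4) unfolding sign_decomp_def by blast
  define c00 where "c00 w = a00 w * b00 w + R1 w * a10 w * b10 w + R2 w * a01 w * b01 w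
    + R1 w * R2 w * a11 w * b11 w" for w
  define c10 where "c10 w = a00 w * b10 w + a10 w * b00 w + R2 w * (a01 w * b11 w + a11 w * b01 w)" for w
  define c01 where "c01 w = a00 w * b01 w + a01 w * b00 w + R1 w * (a10 w * b11 w + a11 w * b10 w)" for w
  define c11 where "c11 w = a00 w * b11 w + a11 w * b00 w + a10 w * b01 w + a01 w * b10 w" for w
  have "polyfun I c00 \<and> polyfun I c10 \<and> polyfun I c01 \<and> polyfun I c11"
    unfolding c00_def c10_def c01_def c11_def using A(1-4) B(1-4) assms(1,2)
    by (intro conjI polyfun_add polyfun_mult)
  moreover have "\<Phi> (extend_rs w r s) * \<Psi> (extend_rs w r s) = c00 w + r * c10 w + s * c01 w + r * s * c11 w"
    if "r^2 = R1 w" "s^2 = R2 w" for w r s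
  proof -
    have "\<Phi> (extend_rs w r s) = a00 w + r * a10 w + s * a01 w + r * s * a11 w"
      "\<Psi> (extend_rs w r s) = b00 w + r * b10 w + s * b01 w + r * s * b11 w"
      using A(5) B(5) that by blast+
    then show ?thesis
      unfolding c00_def c10_def c01_def c11_def that[symmetric] by algebra
  qed
  ultimately show ?thesis
    unfolding sign_decomp_def by blast
qed

lemma polyfun_sign_decomp:
  assumes "polyfun (Inl ` I \<union> range Inr) \<Phi>" "polyfun I R1" "polyfun I R2"
  shows "sign_decomp I R1 R2 \<Phi>"
  using assms(1)
proof (induction rule: polyfun.induct)
  case (polyfun_const c)
  show ?case
    unfolding sign_decomp_def
    by (intro exI[of _ "\<lambda>_. c"] exI[of _ "\<lambda>_. 0"]) (auto intro: polyfun.intros)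
next
  case (polyfun_var i)
  then consider b where "i = Inl b" "b \<in> I" | "i = Inr False" | "i = Inr True"
    by (metis (full_types) UnE imageE rangeE)
  then show ?case
  proof cases
    case 1
    then show ?thesis
      unfolding sign_decomp_def by (intro exI[of _ "\<lambda>w. w b"] exI[of _ "\<lambda>_. 0"]) (auto intro: polyfun.intros)
  next
    case 2
    then show ?thesis
      unfolding sign_decomp_def by (intro exI[of _ "\<lambda>_. 0"] exI[of _ "\<lambda>_. 1"] exI[of _ "\<lambda>_. 0"] exI[of _ "\<lambda>_. 0"])
        (auto intro: polyfun.intros)
  next
    case 3
    then show ?thesis
      unfolding sign_decomp_def by (intro exI[of _ "\<lambda>_. 0"] exI[of _ "\<lambda>_. 0"] exI[of _ "\<lambda>_. 1"] exI[of _ "\<lambda>_. 0"])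
        (auto intro: polyfun.intros)
  qed
next
  case (polyfun_add p q)
  then show ?case
    by (intro sign_decomp_add polyfun_add.IH)
next
  case (polyfun_mult p q)
  then show ?case
    by (intro sign_decomp_mult assms(2,3) polyfun_mult.IH)
qed

text \<open>The product over the four sign changes of \<open>r\<close> and \<open>s\<close> is even in both, hence
  a polynomial in \<open>r\<^sup>2\<close> and \<open>s\<^sup>2\<close>.\<close>

lemma polyfun_sign_product:
  assumes "polyfun (Inl ` I \<union> range Inr) \<Phi>" "polyfun I R1" "polyfun I R2"
  obtains q where "polyfun I q"
    "\<And>w r s. r^2 = R1 w \<Longrightarrow> s^2 = R2 w \<Longrightarrow>
      q w = \<Phi> (extend_rs w r s) * \<Phi> (extend_rs w (-r) s) * \<Phi> (extend_rs w r (-s)) * \<Phi> (extend_rs w (-r) (-s))"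
proof -
  obtain p00 p10 p01 p11 where p: "polyfun I p00" "polyfun I p10" "polyfun I p01" "polyfun I p11"
    "\<And>w r s. r^2 = R1 w \<Longrightarrow> s^2 = R2 w \<Longrightarrow>
      \<Phi> (extend_rs w r s) = p00 w + r * p10 w + s * p01 w + r * s * p11 w"
    using polyfun_sign_decomp[OF assms] unfolding sign_decomp_def by blast
  define q where "q w = ((p00 w)^2 + R2 w * (p01 w)^2 - R1 w * ((p10 w)^2 + R2 w * (p11 w)^2))^2
     - R2 w * (2 * (p00 w * p01 w - R1 w * p10 w * p11 w))^2" for w
  have "polyfun I q"
    unfolding q_def using p(1-4) assms(2,3)
    by (intro polyfun_diff polyfun_mult polyfun_power polyfun_add polyfun_const)
  moreover have "q w = \<Phi> (extend_rs w r s) * \<Phi> (extend_rs w (-r) s) * \<Phi> (extend_rs w r (-s))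
      * \<Phi> (extend_rs w (-r) (-s))" if "r^2 = R1 w" "s^2 = R2 w" for w r s
  proof -
    have neg: "(-r)^2 = R1 w" "(-s)^2 = R2 w"
      using that by simp_all
    show ?thesis
      unfolding q_def p(5)[OF that] p(5)[OF neg(1) that(2)] p(5)[OF that(1) neg(2)] p(5)[OF neg]
        that[symmetric] by algebra
  qed
  ultimately show ?thesis
    using that by blast
qed

lemma polyfun_qpoly2_sign_product:
  obtains q where "polyfun (Basis :: quat2 set) q"
    "\<And>u v. q (\<lambda>b. (u, v) \<bullet> b) = (norm u * norm v) ^ (16*n) *
      (\<Prod>\<sigma>\<in>{1, -1::real}. \<Prod>\<tau>\<in>{1, -1::real}. (norm (qpoly2 n a (\<sigma> *\<^sub>R sgn u) (\<tau> *\<^sub>R sgn v)))\<^sup>2)"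
proof -
  have R: "polyfun Basis (\<lambda>w::quat2 \<Rightarrow> real. (norm (quat2_fst w))\<^sup>2)"
    "polyfun Basis (\<lambda>w::quat2 \<Rightarrow> real. (norm (quat2_snd w))\<^sup>2)"
    using polyfun_vec4_quat2_fst[of id Basis] polyfun_vec4_quat2_snd[of id Basis]
    by (simp_all add: polyfun_norm_squared)
  obtain q where q: "polyfun Basis q"
    "\<And>w r s. r^2 = (norm (quat2_fst w))\<^sup>2 \<Longrightarrow> s^2 = (norm (quat2_snd w))\<^sup>2 \<Longrightarrow>
      q w = homog_normsq n a (extend_rs w r s) * homog_normsq n a (extend_rs w (-r) s)
        * homog_normsq n a (extend_rs w r (-s)) * homog_normsq n a (extend_rs w (-r) (-s))"
    using polyfun_sign_product[OF polyfun_homog_normsq[of n a] R] by blast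
  have "q (\<lambda>b. (u, v) \<bullet> b) = (norm u * norm v) ^ (16*n) *
      (\<Prod>\<sigma>\<in>{1, -1::real}. \<Prod>\<tau>\<in>{1, -1::real}. (norm (qpoly2 n a (\<sigma> *\<^sub>R sgn u) (\<tau> *\<^sub>R sgn v)))\<^sup>2)" for u v
  proof -
    define c where "c = (norm u * norm v) ^ (4*n)"
    define P where "P \<sigma> \<tau> = (norm (qpoly2 n a (\<sigma> *\<^sub>R sgn u) (\<tau> *\<^sub>R sgn v)))\<^sup>2" for \<sigma> \<tau> :: real
    have "q (\<lambda>b. (u, v) \<bullet> b) = (c * P 1 1) * (c * P (-1) 1) * (c * P 1 (-1)) * (c * P (-1) (-1))"
      using q(2)[of "norm u" "\<lambda>b. (u, v) \<bullet> b" "norm v"] homog_normsq_sign[of 1 1 n a u v] homog_normsq_sign[of "-1" 1 n a u v]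
        homog_normsq_sign[of 1 "-1" n a u v] homog_normsq_sign[of "-1" "-1" n a u v]
      unfolding c_def P_def by simp
    also have "\<dots> = c ^ 4 * (P 1 1 * P 1 (-1) * (P (-1) 1 * P (-1) (-1)))"
      by algebra
    also have "c ^ 4 = (norm u * norm v) ^ (16*n)"
      unfolding c_def by (simp flip: power_mult)
    also have "P 1 1 * P 1 (-1) * (P (-1) 1 * P (-1) (-1)) = (\<Prod>\<sigma>\<in>{1, -1::real}. \<Prod>\<tau>\<in>{1, -1::real}. P \<sigma> \<tau>)"
      by simp
    finally show ?thesis
      unfolding P_def .
  qed
  with q(1) that show ?thesis
    by blast
qed

lemma ennreal_abs_ln_le:
  assumes "0 \<le> t" "t \<le> A" "1 \<le> A" "0 \<le> Q" "Q \<le> t^2 * A^6"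
  shows "ennreal \<bar>ln t\<bar> \<le> ennreal (4 * ln A) + ln_minus Q"
proof (cases "t = 0 \<or> Q = 0")
  case True
  then show ?thesis
    by (auto simp: ln_minus_def)
next
  case False
  with assms have t: "0 < t" and Q: "0 < Q"
    by auto
  have "ln Q \<le> ln (t^2 * A^6)"
    using assms(5) Q by simp
  also have "\<dots> = 2 * ln t + 6 * ln A"
    using t assms(3) by (simp add: ln_mult ln_realpow)
  finally have "ln Q \<le> 2 * ln t + 6 * ln A" .
  moreover have "ln t \<le> ln A" "0 \<le> ln A"
    using t assms(2,3) by simp_all
  ultimately have "\<bar>ln t\<bar> \<le> 4 * ln A + max 0 (- ln Q)"
    by (auto simp: abs_if max_def)
  then have "ennreal \<bar>ln t\<bar> \<le> ennreal (4 * ln A + max 0 (- ln Q))"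
    by (rule ennreal_leI)
  also have "\<dots> \<le> ennreal (4 * ln A) + ennreal (max 0 (- ln Q))"
    by (rule ennreal_plus_le)
  also have "ennreal (max 0 (- ln Q)) = ln_minus Q"
    using Q by (simp add: ln_minus_nonzero max_def ennreal_neg)
  finally show ?thesis .
qed

lemma ennreal_abs_ln_norm_qpoly2_le:
  assumes q: "\<And>u v. q (\<lambda>b. (u, v) \<bullet> b) = (norm u * norm v) ^ (16*n) *
      (\<Prod>\<sigma>\<in>{1, -1::real}. \<Prod>\<tau>\<in>{1, -1::real}. (norm (qpoly2 n a (\<sigma> *\<^sub>R sgn u) (\<tau> *\<^sub>R sgn v)))\<^sup>2)"
    and "norm u \<le> 1" "norm v \<le> 1"
  shows "ennreal \<bar>ln (norm (qpoly2 n a (sgn u) (sgn v)))\<bar>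
    \<le> ennreal (4 * ln (1 + (\<Sum>l1\<le>n. \<Sum>l2\<le>n. norm (a l1 l2)))) + ln_minus (q (\<lambda>b. (u, v) \<bullet> b))"
proof -
  define A where "A = 1 + (\<Sum>l1\<le>n. \<Sum>l2\<le>n. norm (a l1 l2))"
  define P where "P \<sigma> \<tau> = norm (qpoly2 n a (\<sigma> *\<^sub>R sgn u) (\<tau> *\<^sub>R sgn v))" for \<sigma> \<tau> :: real
  define c where "c = (norm u * norm v) ^ (16*n)"
  have P_le: "P \<sigma> \<tau> \<le> A" if "\<sigma> \<in> {1, -1}" "\<tau> \<in> {1, -1}" for \<sigma> \<tau>
  proof -
    have "norm (\<sigma> *\<^sub>R sgn u) \<le> 1" "norm (\<tau> *\<^sub>R sgn v) \<le> 1"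
      using that by (auto simp: norm_sgn)
    then show ?thesis
      using norm_qpoly2_le[of "\<sigma> *\<^sub>R sgn u" "\<tau> *\<^sub>R sgn v" n a] unfolding P_def A_def by simp
  qed
  have P_nonneg: "0 \<le> P \<sigma> \<tau>" for \<sigma> \<tau>
    unfolding P_def by simp
  have "0 \<le> c" "c \<le> 1"
    unfolding c_def using assms(2,3) by (auto intro!: power_le_one mult_le_one)
  have q_eq: "q (\<lambda>b. (u, v) \<bullet> b) = c * ((P 1 1)^2 * ((P (-1) 1)^2 * (P 1 (-1))^2 * (P (-1) (-1))^2))"
    unfolding q P_def c_def by (simp add: mult_ac)
  have "(P (-1) 1)^2 * (P 1 (-1))^2 * (P (-1) (-1))^2 \<le> A^2 * A^2 * A^2"
    using P_le P_nonneg by (intro mult_mono power_mono) auto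
  then have rest_le: "(P 1 1)^2 * ((P (-1) 1)^2 * (P 1 (-1))^2 * (P (-1) (-1))^2) \<le> (P 1 1)^2 * A^6"
    by (intro mult_left_mono) simp_all
  have "q (\<lambda>b. (u, v) \<bullet> b) \<le> 1 * ((P 1 1)^2 * A^6)"
    unfolding q_eq using mult_mono[OF \<open>c \<le> 1\<close> rest_le] P_nonneg by simp
  moreover have "0 \<le> q (\<lambda>b. (u, v) \<bullet> b)"
    unfolding q by simp
  moreover have "1 \<le> A"
    unfolding A_def by (simp add: sum_nonneg)
  ultimately show ?thesis
    using ennreal_abs_ln_le[OF P_nonneg P_le[of 1 1]] unfolding P_def A_def by simp
qed

section \<open>Integrals over the quaternionic torus\<close>

lemma emeasure_lborel_unit_ball_pos: "emeasure lborel (ball (0::'a::euclidean_space) 1) \<noteq> 0"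
proof -
  have "emeasure lborel (ball (0::'a) 1) = ennreal (unit_ball_vol (real DIM('a)) * 1 ^ DIM('a))"
    by (rule emeasure_ball) simp
  moreover have "unit_ball_vol (real DIM('a)) > 0"
    by (rule unit_ball_vol_pos) simp
  ultimately show ?thesis
    by (metis ennreal_eq_0_iff mult_1_right not_le power_one)
qed

lemma emeasure_lborel_unit_ball_finite: "emeasure lborel (ball (0::'a::euclidean_space) 1) \<noteq> \<infinity>"
  using emeasure_lborel_ball_finite[of "0::'a" 1] by simp

definition unit_ball_density :: "'a::euclidean_space \<Rightarrow> ennreal" where
  "unit_ball_density x = indicator (ball 0 1) x / emeasure lborel (ball (0::'a) 1)"

lemma borel_measurable_unit_ball_density [measurable]: "unit_ball_density \<in> borel_measurable borel"
  unfolding unit_ball_density_def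
  by (intro borel_measurable_divide_ennreal borel_measurable_indicator measurable_const) auto

lemma finite_measure_uniform_unit_ball:
  "finite_measure (uniform_measure lborel (ball (0::'a::euclidean_space) 1))"
proof (rule finite_measureI)
  have "emeasure (uniform_measure lborel (ball (0::'a) 1)) (ball 0 1) = 1"
    by (rule emeasure_uniform_measure_1[OF emeasure_lborel_unit_ball_pos emeasure_lborel_unit_ball_finite])
  then show "emeasure (uniform_measure lborel (ball (0::'a) 1)) (space (uniform_measure lborel (ball 0 1))) \<noteq> \<infinity>"
    by (simp add: emeasure_uniform_measure)
qed

lemma sets_torusH: "sets torusH = sets (borel :: quat2 measure)"
proof -
  have "sets torusH = sets (borel \<Otimes>\<^sub>M borel :: quat2 measure)"
    unfolding torusH_def sphere_unif_def by (rule sets_pair_measure_cong) simp_all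
  then show ?thesis
    unfolding borel_prod .
qed

lemma nn_integral_torusH:
  assumes g: "g \<in> borel_measurable (borel :: quat2 measure)"
  shows "(\<integral>\<^sup>+p. g p \<partial>torusH)
    = (\<integral>\<^sup>+z. unit_ball_density (fst z) * unit_ball_density (snd z) * g (sgn (fst z), sgn (snd z)) \<partial>lborel)"
proof -
  let ?U = "uniform_measure lborel (ball (0::real^4) 1)"
  have sgn_meas: "sgn \<in> ?U \<rightarrow>\<^sub>M borel"
    by (simp add: measurable_cong_sets[of ?U borel])
  have "sphere_unif = distr ?U borel sgn"
    unfolding sphere_unif_def by (simp add: sgn_div_norm[abs_def])
  moreover have "sigma_finite_measure (distr ?U borel sgn)"
    using finite_measure_uniform_unit_ball sgn_meas
    by (intro finite_measure.axioms(1) finite_measure.finite_measure_distr)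
  ultimately have torusH: "torusH = distr (?U \<Otimes>\<^sub>M ?U) (borel \<Otimes>\<^sub>M borel) (\<lambda>(x, y). (sgn x, sgn y))"
    unfolding torusH_def using pair_measure_distr[OF sgn_meas sgn_meas] by simp
  have U: "?U = density lborel unit_ball_density"
    unfolding uniform_measure_def unit_ball_density_def[abs_def] ..
  have "?U \<Otimes>\<^sub>M ?U = density (lborel \<Otimes>\<^sub>M lborel) (\<lambda>(x, y). unit_ball_density x * unit_ball_density y)"
    using finite_measure_uniform_unit_ball[where 'a = "real^4", THEN finite_measure.axioms(1)] unfolding U
    by (intro pair_measure_density) (auto intro: lborel.sigma_finite_measure_axioms)
  then have U2: "?U \<Otimes>\<^sub>M ?U = density lborel (\<lambda>z. unit_ball_density (fst z) * unit_ball_density (snd z))"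
    by (simp add: lborel_prod split_beta')
  have fst_meas: "(fst :: quat2 \<Rightarrow> real^4) \<in> borel \<rightarrow>\<^sub>M borel"
    and snd_meas: "(snd :: quat2 \<Rightarrow> real^4) \<in> borel \<rightarrow>\<^sub>M borel"
    by (intro borel_measurable_continuous_onI continuous_intros)+
  have "(\<lambda>z::quat2. (sgn (fst z), sgn (snd z))) \<in> borel \<rightarrow>\<^sub>M borel"
    using measurable_Pair[OF measurable_compose[OF fst_meas borel_measurable_sgn]
        measurable_compose[OF snd_meas borel_measurable_sgn]]
    by (simp add: borel_prod)
  then have g_sgn: "(\<lambda>z::quat2. g (sgn (fst z), sgn (snd z))) \<in> borel_measurable borel"
    using g by (rule measurable_compose)
  have density_meas: "(\<lambda>z::quat2. unit_ball_density (fst z) * unit_ball_density (snd z)) \<in> borel_measurable borel"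
    by (intro borel_measurable_times_ennreal measurable_compose[OF fst_meas borel_measurable_unit_ball_density]
        measurable_compose[OF snd_meas borel_measurable_unit_ball_density])
  have g2: "g \<in> borel_measurable (borel \<Otimes>\<^sub>M borel)"
    using g by (simp add: borel_prod)
  have "(\<integral>\<^sup>+p. g p \<partial>torusH) = (\<integral>\<^sup>+z. g (sgn (fst z), sgn (snd z)) \<partial>(?U \<Otimes>\<^sub>M ?U))"
    unfolding torusH using g2 by (subst nn_integral_distr) (auto simp: case_prod_beta)
  also have "\<dots> = (\<integral>\<^sup>+z. unit_ball_density (fst z) * unit_ball_density (snd z) * g (sgn (fst z), sgn (snd z)) \<partial>lborel)"
    unfolding U2 using density_meas g_sgn by (intro nn_integral_density) simp_all
  finally show ?thesis .
qed

lemma abs_inner_Basis_prod_le: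
  assumes "b \<in> Basis"
  shows "\<bar>(u, v) \<bullet> b\<bar> \<le> max (norm u) (norm v)"
proof -
  from assms consider e where "e \<in> Basis" "b = (e, 0)" | e where "e \<in> Basis" "b = (0, e)"
    unfolding Basis_prod_def by auto
  then show ?thesis
  proof cases
    case 1
    then show ?thesis
      using Basis_le_norm[of e u] by (simp add: inner_Pair_0)
  next
    case 2
    then show ?thesis
      using Basis_le_norm[of e v] by (simp add: inner_Pair_0)
  qed
qed

lemma nn_integral_lborel_coordinates:
  fixes H :: "('a::euclidean_space \<Rightarrow> real) \<Rightarrow> ennreal"
  assumes "H \<in> borel_measurable (PiM Basis (\<lambda>_. lborel))"
  shows "(\<integral>\<^sup>+z. H (\<lambda>b\<in>Basis. z \<bullet> b) \<partial>lborel) = (\<integral>\<^sup>+f. H f \<partial>PiM Basis (\<lambda>_. lborel))"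
proof -
  have [measurable]: "(\<lambda>z::'a. \<lambda>b\<in>Basis. z \<bullet> b) \<in> borel \<rightarrow>\<^sub>M PiM Basis (\<lambda>_. lborel)"
    by measurable
  have "(\<integral>\<^sup>+z. H (\<lambda>b\<in>Basis. z \<bullet> b) \<partial>lborel)
      = (\<integral>\<^sup>+f. H (\<lambda>b\<in>Basis. (\<Sum>b'\<in>Basis. f b' *\<^sub>R b') \<bullet> b) \<partial>PiM Basis (\<lambda>_. lborel))"
    using assms by (subst lborel_eq) (rule nn_integral_distr; simp)
  also have "\<dots> = (\<integral>\<^sup>+f. H f \<partial>PiM Basis (\<lambda>_. lborel))"
  proof (rule nn_integral_cong)
    fix f :: "'a \<Rightarrow> real"
    assume "f \<in> space (PiM Basis (\<lambda>_. lborel))"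
    then have "f \<in> extensional Basis"
      by (simp add: space_PiM PiE_def)
    moreover have "(\<Sum>b'\<in>Basis. f b' *\<^sub>R b') \<bullet> b = f b" if "b \<in> Basis" for b
      using that by (simp add: inner_sum_left inner_Basis if_distrib cong: if_cong)
    ultimately show "H (\<lambda>b\<in>Basis. (\<Sum>b'\<in>Basis. f b' *\<^sub>R b') \<bullet> b) = H f"
      by (simp add: extensional_restrict cong: restrict_cong)
  qed
  finally show ?thesis .
qed

text \<open>Under the radial projection, \<open>torusH\<close> comes from the uniform measure on a product of
  balls, which lies in the cube \<open>[-1, 1]\<^sup>8\<close>.\<close>

lemma nn_integral_torusH_finite:
  fixes g :: "quat2 \<Rightarrow> ennreal" and h :: "(quat2 \<Rightarrow> real) \<Rightarrow> ennreal"
  assumes g: "g \<in> borel_measurable borel" and h: "h \<in> borel_measurable (PiM Basis (\<lambda>_. lborel))"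
    and le: "\<And>u v. norm u < 1 \<Longrightarrow> norm v < 1 \<Longrightarrow> g (sgn u, sgn v) \<le> h (\<lambda>b\<in>Basis. (u, v) \<bullet> b)"
    and fin: "(\<integral>\<^sup>+f. h f * cube_indicator Basis f \<partial>PiM Basis (\<lambda>_. lborel)) < \<infinity>"
  shows "(\<integral>\<^sup>+p. g p \<partial>torusH) < \<infinity>"
proof -
  define c where "c = inverse (emeasure lborel (ball (0::real^4) 1))"
  define H where "H f = h f * cube_indicator Basis f" for f
  have [measurable]: "H \<in> borel_measurable (PiM Basis (\<lambda>_. lborel))"
    unfolding H_def using h by measurable
  have "(\<integral>\<^sup>+p. g p \<partial>torusH) \<le> (\<integral>\<^sup>+z. c * c * H (\<lambda>b\<in>Basis. z \<bullet> b) \<partial>lborel)"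
    unfolding nn_integral_torusH[OF g]
  proof (rule nn_integral_mono)
    fix z :: quat2
    show "unit_ball_density (fst z) * unit_ball_density (snd z) * g (sgn (fst z), sgn (snd z))
        \<le> c * c * H (\<lambda>b\<in>Basis. z \<bullet> b)"
    proof (cases "norm (fst z) < 1 \<and> norm (snd z) < 1")
      case True
      then have "\<bar>z \<bullet> b\<bar> \<le> 1" if "b \<in> Basis" for b
        using abs_inner_Basis_prod_le[OF that, of "fst z" "snd z"] by (simp add: max_def split: if_splits)
      then have "cube_indicator Basis (\<lambda>b\<in>Basis. z \<bullet> b) = 1"
        unfolding cube_indicator_def by (intro prod.neutral) (auto simp: indicator_def abs_le_iff)
      then show ?thesis
        using True le[of "fst z" "snd z"]
        by (simp add: unit_ball_density_def c_def H_def divide_ennreal_def mult_left_mono)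
    qed (auto simp: unit_ball_density_def)
  qed
  also have "\<dots> = c * c * (\<integral>\<^sup>+f. H f \<partial>PiM Basis (\<lambda>_. lborel))"
    by (simp add: nn_integral_cmult nn_integral_lborel_coordinates)
  also have "\<dots> < \<infinity>"
  proof -
    have "c < \<infinity>"
      unfolding c_def using emeasure_lborel_unit_ball_pos by (simp add: less_top[symmetric])
    with fin show ?thesis
      by (simp add: H_def ennreal_mult_less_top)
  qed
  finally show ?thesis .
qed

lemma nn_integral_const_plus_ln_minus_polyfun_finite:
  assumes "finite I" "polyfun I q" "q f0 \<noteq> 0"
  shows "(\<integral>\<^sup>+f. (ennreal K + ln_minus (q f)) * cube_indicator I f \<partial>PiM I (\<lambda>_. lborel)) < \<infinity>"
proof -
  have [measurable]: "q \<in> borel_measurable (PiM I (\<lambda>_. lborel))"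
    by (rule polyfun_measurable[OF assms(2)])
  have "(\<integral>\<^sup>+f. (ennreal K + ln_minus (q f)) * cube_indicator I f \<partial>PiM I (\<lambda>_. lborel))
      = ennreal K * 2 ^ card I + (\<integral>\<^sup>+f. ln_minus (q f) * cube_indicator I f \<partial>PiM I (\<lambda>_. lborel))"
    using assms(1)
    by (simp add: distrib_right nn_integral_add nn_integral_cmult nn_integral_cube_indicator)
  also have "\<dots> < \<infinity>"
    using nn_integral_ln_minus_polyfun_finite[OF assms]
    by (simp add: ennreal_mult_less_top power_less_top_ennreal)
  finally show ?thesis .
qed

theorem theorem7p1:
  fixes n :: nat and a :: "nat \<Rightarrow> nat \<Rightarrow> real^4"
  assumes "\<exists>l1\<le>n. \<exists>l2\<le>n. a l1 l2 \<noteq> 0"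
  shows "integrable torusH (\<lambda>(x, y). ln (norm (qpoly2 n a x y)))"
proof -
  define K where "K = 4 * ln (1 + (\<Sum>l1\<le>n. \<Sum>l2\<le>n. norm (a l1 l2)))"
  obtain q where q: "polyfun (Basis :: quat2 set) q"
    "\<And>u v. q (\<lambda>b. (u, v) \<bullet> b) = (norm u * norm v) ^ (16*n) *
      (\<Prod>\<sigma>\<in>{1, -1::real}. \<Prod>\<tau>\<in>{1, -1::real}. (norm (qpoly2 n a (\<sigma> *\<^sub>R sgn u) (\<tau> *\<^sub>R sgn v)))\<^sup>2)"
    using polyfun_qpoly2_sign_product by blast
  obtain z w where zw: "cmod z = 1" "cmod w = 1" "\<And>\<sigma> \<tau>. \<sigma> \<in> {1, -1::real} \<Longrightarrow> \<tau> \<in> {1, -1::real} \<Longrightarrow>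
      qpoly2 n a (\<sigma> *\<^sub>R quat_of_complex z) (\<tau> *\<^sub>R quat_of_complex w) \<noteq> 0"
    using qpoly2_nonvanishing_on_complex_torus[OF assms] by blast
  then have "q (\<lambda>b. (quat_of_complex z, quat_of_complex w) \<bullet> b) \<noteq> 0"
    using zw(3)[of 1 1] zw(3)[of 1 "-1"] zw(3)[of "-1" 1] zw(3)[of "-1" "-1"] by (simp add: q(2) sgn_div_norm)
  then have "(\<integral>\<^sup>+f. (ennreal K + ln_minus (q f)) * cube_indicator Basis f \<partial>PiM Basis (\<lambda>_. lborel)) < \<infinity>"
    by (rule nn_integral_const_plus_ln_minus_polyfun_finite[OF finite_Basis q(1)])
  moreover have "q (\<lambda>b\<in>Basis. (u, v) \<bullet> b) = q (\<lambda>b. (u, v) \<bullet> b)" for u v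
    using polyfun_cong[OF q(1)] by simp
  ultimately have "(\<integral>\<^sup>+p. ennreal \<bar>ln (norm (qpoly2 n a (fst p) (snd p)))\<bar> \<partial>torusH) < \<infinity>"
    using ennreal_abs_ln_norm_qpoly2_le[OF q(2)] polyfun_measurable[OF q(1)]
    by (intro nn_integral_torusH_finite[where h = "\<lambda>f. ennreal K + ln_minus (q f)"]) (auto simp: K_def)
  then show ?thesis
    by (intro integrableI_bounded) (auto simp: case_prod_beta measurable_cong_sets[OF sets_torusH])
qed

end
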